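(* Let $k$ be an algebraically closed field of characteristic $0$, let $d\ge 3$ and $n\ge 2$ be integers, and let $(V_n,\Theta_d)$ be the $d$-linear space over $k$ with basis $v_1,\dots,v_n$ of $V_n$ and $\Theta_d(v_{i_1},\dots,v_{i_d})=1$ if $i_1+\dots+i_d=(d-1)n+1$ and $=0$ otherwise. Let $\mathcal{O}(\Theta_d)$ be its orthogonal group, $\mathrm{Cent}_k(\Theta_d)$ its center, $\mathbf{G}$ the group of $k$-algebra automorphisms of $\mathrm{Cent}_k(\Theta_d)$, and $\chi:\mathcal{O}(\Theta_d)\to\mathbf{G}$ the homomorphism $\chi(\sigma)(f)=\sigma f\sigma^{-1}$. Let $\mu_d=\{\zeta\in k:\zeta^d=1\}$, identified with the subgroup $\{\zeta\,\mathrm{id}_{V_n}\}$ of $\mathcal{O}(\Theta_d)$. Then $$1\longrightarrow\mu_d\longrightarrow\mathcal{O}(\Theta_d)\xrightarrow{\ \chi\ }\mathbf{G}\longrightarrow 1$$ is a short exact sequence of groups.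
   Context: A $d$-linear space over $k$ is a pair $(V,\Theta)$ with $V$ a finite-dimensional $k$-vector space and $\Theta:V^d\to k$ a symmetric $d$-linear form. Its center is $\mathrm{Cent}_k(\Theta)=\{f\in\mathrm{End}_k(V):\Theta(f(u_1),u_2,\dots,u_d)=\Theta(u_1,f(u_2),\dots,u_d)\ \forall u_i\in V\}$, a commutative subalgebra of $\mathrm{End}_k(V)$. The orthogonal group is $\mathcal{O}(\Theta)=\{\sigma\in GL_k(V):\Theta(\sigma u_1,\dots,\sigma u_d)=\Theta(u_1,\dots,u_d)\ \forall u_i\}$; conjugation by elements of $\mathcal{O}(\Theta)$ preserves $\mathrm{Cent}_k(\Theta)$. The linear map $\psi(v_i)=v_{i-1}$ (with $v_0=0$) lies in $\mathrm{Cent}_k(\Theta_d)$. *)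

theory Defs
  imports "HOL-Computational_Algebra.Polynomial" "HOL-Algebra.Coset"
    "Jordan_Normal_Form.Matrix"
begin

text \<open>The basis vector v_i (1 \<le> i \<le> n) is
  the 0-based unit vector with index i - 1, so the condition
  i_1 + ... + i_d = (d-1) n + 1 on 1-based indices is written with a shift by 1.
  The d arguments are given as a function u with u 0, ..., u (d-1) the arguments.\<close>
definition theta :: "nat \<Rightarrow> nat \<Rightarrow> (nat \<Rightarrow> 'k::field vec) \<Rightarrow> 'k" where
  "theta d n u =
     (\<Sum>i \<in> {i \<in> PiE {..<d} (\<lambda>_. {..<n}). (\<Sum>j<d. i j + 1) = (d - 1) * n + 1}.
        \<Prod>j<d. u j $ i j)"

definition args :: "nat \<Rightarrow> nat \<Rightarrow> (nat \<Rightarrow> 'k::field vec) set" where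
  "args d n = {u. \<forall>j<d. u j \<in> carrier_vec n}"

definition cent :: "nat \<Rightarrow> nat \<Rightarrow> 'k::field mat set" where
  "cent d n = {f \<in> carrier_mat n n. \<forall>u \<in> args d n.
      theta d n (u(0 := f *\<^sub>v u 0)) = theta d n (u(1 := f *\<^sub>v u 1))}"

definition orth :: "nat \<Rightarrow> nat \<Rightarrow> 'k::field mat set" where
  "orth d n = {\<sigma> \<in> carrier_mat n n. invertible_mat \<sigma> \<and>
      (\<forall>u \<in> args d n. theta d n (\<lambda>j. \<sigma> *\<^sub>v u j) = theta d n u)}"

definition O_grp :: "nat \<Rightarrow> nat \<Rightarrow> 'k::field mat monoid" where
  "O_grp d n = \<lparr>carrier = orth d n, mult = (*), one = 1\<^sub>m n\<rparr>"

definition algaut :: "nat \<Rightarrow> nat \<Rightarrow> ('k::field mat \<Rightarrow> 'k mat) set" where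
  "algaut d n = {\<phi>. \<phi> \<in> extensional (cent d n) \<and> bij_betw \<phi> (cent d n) (cent d n) \<and>
      (\<forall>f \<in> cent d n. \<forall>g \<in> cent d n. \<phi> (f + g) = \<phi> f + \<phi> g \<and> \<phi> (f * g) = \<phi> f * \<phi> g) \<and>
      (\<forall>c. \<forall>f \<in> cent d n. \<phi> (c \<cdot>\<^sub>m f) = c \<cdot>\<^sub>m \<phi> f) \<and>
      \<phi> (1\<^sub>m n) = 1\<^sub>m n}"

definition G_grp :: "nat \<Rightarrow> nat \<Rightarrow> ('k::field mat \<Rightarrow> 'k mat) monoid" where
  "G_grp d n = \<lparr>carrier = algaut d n,
                 mult = (\<lambda>\<phi> \<psi>. restrict (\<phi> \<circ> \<psi>) (cent d n)),
                 one = restrict id (cent d n)\<rparr>"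

definition mu_grp :: "nat \<Rightarrow> 'k::field monoid" where
  "mu_grp d = \<lparr>carrier = {\<zeta>. \<zeta> ^ d = 1}, mult = (*), one = 1\<rparr>"

definition iota :: "nat \<Rightarrow> 'k::field \<Rightarrow> 'k mat" where
  "iota n \<zeta> = \<zeta> \<cdot>\<^sub>m 1\<^sub>m n"

definition chi :: "nat \<Rightarrow> nat \<Rightarrow> 'k::field mat \<Rightarrow> ('k mat \<Rightarrow> 'k mat)" where
  "chi d n \<sigma> = restrict (\<lambda>f. \<sigma> * f * inv\<^bsub>O_grp d n\<^esub> \<sigma>) (cent d n)"

end

theory Submission
  imports Defs "HOL-Computational_Algebra.Formal_Power_Series" "HOL-Algebra.Bij"
begin

text \<open>Identify \<open>V\<^sub>n\<close> with \<open>k[X]/(X\<^sup>n)\<close> via \<open>v\<^sub>i \<mapsto> X\<^sup>n\<^sup>-\<^sup>i\<close>. Then \<open>\<Theta>\<^sub>d(u\<^sub>1, \<dots>, u\<^sub>d)\<close> is the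
  coefficient of \<open>X\<^sup>n\<^sup>-\<^sup>1\<close> in the product \<open>u\<^sub>1 \<cdots> u\<^sub>d\<close>, so multiplication operators lie in the
  centre; for \<open>d \<ge> 3\<close> they exhaust it, since a third argument is free to test against. Thus
  \<open>Cent(\<Theta>\<^sub>d) \<cong> k[X]/(X\<^sup>n)\<close>.

  An element of the kernel of \<open>\<chi>\<close> commutes with all multiplications, hence is multiplication
  by some \<open>w\<close>; invariance of \<open>\<Theta>\<^sub>d\<close> gives \<open>w\<^sup>d = 1\<close>, which in characteristic \<open>0\<close> forces \<open>w\<close> to be a
  constant \<open>d\<close>-th root of unity.

  Every algebra automorphism of \<open>k[X]/(X\<^sup>n)\<close> is a substitution \<open>b \<mapsto> b \<circ> g\<close> with \<open>g(0) = 0\<close>,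
  \<open>g'(0) \<noteq> 0\<close>. With \<open>h\<close> the compositional inverse of \<open>g\<close>, let \<open>U\<close> represent the linear form
  \<open>c \<mapsto> [X\<^sup>n\<^sup>-\<^sup>1](c \<circ> h)\<close> and choose \<open>w\<close> with \<open>w\<^sup>d = U\<close> (here \<open>k\<close> is algebraically closed). The
  operator \<open>b \<mapsto> w \<cdot> (b \<circ> g)\<close> then preserves \<open>\<Theta>\<^sub>d\<close> and conjugates multiplication by \<open>a\<close> into
  multiplication by \<open>a \<circ> g\<close>, so \<open>\<chi>\<close> is onto.\<close>

section \<open>Truncated power series as a model of \<open>V\<^sub>n\<close>\<close>

definition fps_eq_below :: "nat \<Rightarrow> 'a::zero fps \<Rightarrow> 'a fps \<Rightarrow> bool" where
  "fps_eq_below n a b \<longleftrightarrow> (\<forall>e<n. fps_nth a e = fps_nth b e)"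

lemma fps_eq_below_refl [simp]: "fps_eq_below n a a"
  by (simp add: fps_eq_below_def)

lemma fps_eq_below_nth: "fps_eq_below n a b \<Longrightarrow> e < n \<Longrightarrow> fps_nth a e = fps_nth b e"
  by (simp add: fps_eq_below_def)

lemma fps_eq_below_sym: "fps_eq_below n a b \<Longrightarrow> fps_eq_below n b a"
  by (simp add: fps_eq_below_def)

lemma fps_eq_below_trans [trans]: "fps_eq_below n a b \<Longrightarrow> fps_eq_below n b c \<Longrightarrow> fps_eq_below n a c"
  by (simp add: fps_eq_below_def)

lemma fps_eq_below_add:
  "fps_eq_below n a a' \<Longrightarrow> fps_eq_below n b b' \<Longrightarrow> fps_eq_below n (a + b) (a' + b')"
  by (simp add: fps_eq_below_def)

lemma fps_eq_below_mult:
  fixes a :: "'a::comm_semiring_1 fps"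
  shows "fps_eq_below n a a' \<Longrightarrow> fps_eq_below n b b' \<Longrightarrow> fps_eq_below n (a * b) (a' * b')"
  unfolding fps_eq_below_def fps_mult_nth by (auto intro!: sum.cong)

lemma fps_eq_below_prod:
  fixes f :: "'b \<Rightarrow> 'a::comm_semiring_1 fps"
  shows "(\<And>j. j \<in> S \<Longrightarrow> fps_eq_below n (f j) (g j)) \<Longrightarrow> fps_eq_below n (prod f S) (prod g S)"
  by (induction S rule: infinite_finite_induct) (auto intro: fps_eq_below_mult)

lemma fps_eq_below_compose:
  "fps_nth g 0 = 0 \<Longrightarrow> fps_eq_below n a b \<Longrightarrow> fps_eq_below n (a oo g) (b oo g)"
  unfolding fps_eq_below_def fps_compose_nth by (auto intro!: sum.cong)

lemma fps_eq_below_truncation: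
  "fps_eq_below n a (\<Sum>e<n. fps_const (fps_nth a e) * fps_X ^ e)"
  by (auto simp: fps_eq_below_def fps_sum_nth mult_delta_right sum.delta' cong: if_cong)

text \<open>Vector indices are 0-based: coordinate \<open>i\<close>, the basis vector \<open>v\<^sub>i\<^sub>+\<^sub>1\<close>, corresponds to
  \<open>X\<^sup>n\<^sup>-\<^sup>1\<^sup>-\<^sup>i\<close>.\<close>

definition fps_of_vec :: "nat \<Rightarrow> 'a::zero vec \<Rightarrow> 'a fps" where
  "fps_of_vec n v = Abs_fps (\<lambda>e. if e < n then v $ (n - 1 - e) else 0)"

definition vec_of_fps :: "nat \<Rightarrow> 'a fps \<Rightarrow> 'a vec" where
  "vec_of_fps n a = vec n (\<lambda>i. fps_nth a (n - 1 - i))"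

lemma vec_of_fps_carrier [simp]: "vec_of_fps n a \<in> carrier_vec n"
  by (simp add: vec_of_fps_def)

lemma dim_vec_of_fps [simp]: "dim_vec (vec_of_fps n a) = n"
  by (simp add: vec_of_fps_def)

lemma vec_of_fps_of_vec: "v \<in> carrier_vec n \<Longrightarrow> vec_of_fps n (fps_of_vec n v) = v"
  by (auto simp: vec_of_fps_def fps_of_vec_def)

lemma fps_of_vec_of_fps: "fps_eq_below n (fps_of_vec n (vec_of_fps n a)) a"
  by (auto simp: vec_of_fps_def fps_of_vec_def fps_eq_below_def)

lemma vec_of_fps_eq_iff: "vec_of_fps n a = vec_of_fps n b \<longleftrightarrow> fps_eq_below n a b"
proof
  assume eq: "vec_of_fps n a = vec_of_fps n b"
  show "fps_eq_below n a b"
    unfolding fps_eq_below_def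
  proof (intro allI impI)
    fix e assume "e < n"
    then show "fps_nth a e = fps_nth b e"
      using arg_cong[OF eq, of "\<lambda>v. v $ (n - 1 - e)"] by (simp add: vec_of_fps_def)
  qed
qed (auto simp: vec_of_fps_def fps_eq_below_def)

lemma fps_of_vec_eq_sum:
  assumes "v \<in> carrier_vec n"
  shows "fps_of_vec n v = (\<Sum>c<n. fps_const (v $ c) * fps_X ^ (n - 1 - c))"
proof (rule fps_ext)
  fix e
  have "fps_nth (\<Sum>c<n. fps_const (v $ c) * fps_X ^ (n - 1 - c)) e
      = (\<Sum>c<n. if c = n - 1 - e \<and> e < n then v $ c else 0)"
    by (auto simp: fps_sum_nth intro!: sum.cong)
  also have "\<dots> = (if e < n then v $ (n - 1 - e) else 0)"
    by (cases "e < n") (auto simp: sum.delta)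
  finally show "fps_nth (fps_of_vec n v) e = fps_nth (\<Sum>c<n. fps_const (v $ c) * fps_X ^ (n - 1 - c)) e"
    by (simp add: fps_of_vec_def)
qed

lemma fps_eq_below_by_pairing:
  fixes a b :: "'a::comm_ring_1 fps"
  assumes "\<And>c. c \<in> carrier_vec n \<Longrightarrow>
    fps_nth (a * fps_of_vec n c) (n - 1) = fps_nth (b * fps_of_vec n c) (n - 1)"
  shows "fps_eq_below n a b"
  unfolding fps_eq_below_def
proof (intro allI impI)
  fix e assume e: "e < n"
  have pairing: "fps_nth (z * fps_of_vec n (vec_of_fps n (fps_X ^ (n - 1 - e)))) (n - 1) = fps_nth z e"
    for z :: "'a fps"
  proof -
    have "fps_nth (z * fps_of_vec n (vec_of_fps n (fps_X ^ (n - 1 - e)))) (n - 1)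
        = fps_nth (z * fps_X ^ (n - 1 - e)) (n - 1)"
      using e by (intro fps_eq_below_nth[of n] fps_eq_below_mult fps_of_vec_of_fps) auto
    also have "\<dots> = fps_nth z e" using e by (simp add: fps_X_power_mult_right_nth)
    finally show ?thesis .
  qed
  show "fps_nth a e = fps_nth b e" using assms[of "vec_of_fps n (fps_X ^ (n - 1 - e))"] pairing by simp
qed

definition fps_linear :: "('a::comm_ring_1 fps \<Rightarrow> 'a fps) \<Rightarrow> bool" where
  "fps_linear L \<longleftrightarrow>
     (\<forall>a b. L (a + b) = L a + L b) \<and> (\<forall>c a. L (fps_const c * a) = fps_const c * L a)"

definition respects_fps_eq_below :: "nat \<Rightarrow> ('a::zero fps \<Rightarrow> 'a fps) \<Rightarrow> bool" where
  "respects_fps_eq_below n L \<longleftrightarrow> (\<forall>a b. fps_eq_below n a b \<longrightarrow> fps_eq_below n (L a) (L b))"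

definition op_mat :: "nat \<Rightarrow> ('a::comm_ring_1 fps \<Rightarrow> 'a fps) \<Rightarrow> 'a mat" where
  "op_mat n L = mat n n (\<lambda>(r, c). fps_nth (L (fps_X ^ (n - 1 - c))) (n - 1 - r))"

lemma op_mat_carrier [simp]: "op_mat n L \<in> carrier_mat n n"
  by (simp add: op_mat_def)

lemma dim_op_mat [simp]: "dim_row (op_mat n L) = n" "dim_col (op_mat n L) = n"
  by (simp_all add: op_mat_def)

lemma fps_linear_0: "fps_linear L \<Longrightarrow> L 0 = 0"
  unfolding fps_linear_def by (metis add_cancel_right_right add_0)

lemma fps_linear_sum:
  assumes "fps_linear L"
  shows "L (\<Sum>c\<in>S. fps_const (f c) * g c) = (\<Sum>c\<in>S. fps_const (f c) * L (g c))"
  by (induction S rule: infinite_finite_induct) (use assms fps_linear_0 in \<open>auto simp: fps_linear_def\<close>)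

lemma fps_linear_mult_left [simp]: "fps_linear (\<lambda>b. a * b)"
  by (simp add: fps_linear_def algebra_simps)

lemma respects_fps_eq_below_mult_left [simp]:
  "respects_fps_eq_below n (\<lambda>b. (a :: 'a::comm_semiring_1 fps) * b)"
  by (auto simp: respects_fps_eq_below_def intro: fps_eq_below_mult)

lemma op_mat_mult_vec:
  fixes L :: "'a::field fps \<Rightarrow> 'a fps"
  assumes "fps_linear L" "v \<in> carrier_vec n"
  shows "op_mat n L *\<^sub>v v = vec_of_fps n (L (fps_of_vec n v))"
proof (rule eq_vecI)
  fix r assume "r < dim_vec (vec_of_fps n (L (fps_of_vec n v)))"
  then have r: "r < n" by simp
  have "L (fps_of_vec n v) = (\<Sum>c<n. fps_const (v $ c) * L (fps_X ^ (n - 1 - c)))"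
    using fps_of_vec_eq_sum[OF assms(2)] fps_linear_sum[OF assms(1)] by simp
  then have "vec_of_fps n (L (fps_of_vec n v)) $ r
      = (\<Sum>c<n. v $ c * fps_nth (L (fps_X ^ (n - 1 - c))) (n - 1 - r))"
    using r by (simp add: vec_of_fps_def fps_sum_nth)
  moreover have "(op_mat n L *\<^sub>v v) $ r = (\<Sum>c<n. fps_nth (L (fps_X ^ (n - 1 - c))) (n - 1 - r) * v $ c)"
    using r assms(2) by (simp add: op_mat_def scalar_prod_def lessThan_atLeast0)
  ultimately show "(op_mat n L *\<^sub>v v) $ r = vec_of_fps n (L (fps_of_vec n v)) $ r"
    by (simp add: mult.commute)
qed (use assms in auto)

lemma eq_mat_by_mult_vecI:
  fixes A B :: "'a::field mat"
  assumes "A \<in> carrier_mat n n" "B \<in> carrier_mat n n"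
    and "\<And>v. v \<in> carrier_vec n \<Longrightarrow> A *\<^sub>v v = B *\<^sub>v v"
  shows "A = B"
proof (rule eq_matI)
  fix i j assume "i < dim_row B" "j < dim_col B"
  then have ij: "i < n" "j < n" using assms by auto
  have "(A *\<^sub>v unit_vec n j) $ i = A $$ (i, j)" "(B *\<^sub>v unit_vec n j) $ i = B $$ (i, j)"
    using ij assms(1,2)
    by (simp_all add: scalar_prod_def unit_vec_def mult_delta_right sum.delta cong: if_cong)
  then show "A $$ (i, j) = B $$ (i, j)" using assms(3)[of "unit_vec n j"] by simp
qed (use assms in auto)

lemma op_mat_mult:
  fixes L1 L2 :: "'a::field fps \<Rightarrow> 'a fps"
  assumes "fps_linear L1" "fps_linear L2" "respects_fps_eq_below n L1"
  shows "op_mat n L1 * op_mat n L2 = op_mat n (\<lambda>a. L1 (L2 a))"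
proof (rule eq_mat_by_mult_vecI[of _ n])
  fix v :: "'a vec" assume v: "v \<in> carrier_vec n"
  have "(op_mat n L1 * op_mat n L2) *\<^sub>v v = op_mat n L1 *\<^sub>v (op_mat n L2 *\<^sub>v v)"
    using v by (simp add: assoc_mult_mat_vec[of _ n n _ n])
  also have "\<dots> = vec_of_fps n (L1 (fps_of_vec n (vec_of_fps n (L2 (fps_of_vec n v)))))"
    using assms v by (simp add: op_mat_mult_vec)
  also have "\<dots> = vec_of_fps n (L1 (L2 (fps_of_vec n v)))"
    using assms(3) fps_of_vec_of_fps by (auto simp: respects_fps_eq_below_def vec_of_fps_eq_iff)
  also have "\<dots> = op_mat n (\<lambda>a. L1 (L2 a)) *\<^sub>v v"
    using assms(1,2) v by (simp add: op_mat_mult_vec fps_linear_def)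
  finally show "(op_mat n L1 * op_mat n L2) *\<^sub>v v = op_mat n (\<lambda>a. L1 (L2 a)) *\<^sub>v v" .
qed auto

lemma op_mat_cong: "(\<And>a. fps_eq_below n (L a) (L' a)) \<Longrightarrow> op_mat n L = op_mat n L'"
  by (auto simp: op_mat_def fps_eq_below_def)

lemma op_mat_id: "op_mat n (\<lambda>a. a) = (1\<^sub>m n :: 'a::comm_ring_1 mat)"
  by (rule eq_matI) (auto simp: op_mat_def)

lemma op_mat_add: "op_mat n (\<lambda>a. L1 a + L2 a) = op_mat n L1 + op_mat n L2"
  by (rule eq_matI) (auto simp: op_mat_def)

lemma op_mat_smult: "op_mat n (\<lambda>a. fps_const c * L a) = c \<cdot>\<^sub>m op_mat n L"
  by (rule eq_matI) (auto simp: op_mat_def)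

definition fps_mult_mat :: "nat \<Rightarrow> 'a::comm_ring_1 fps \<Rightarrow> 'a mat" where
  "fps_mult_mat n a = op_mat n (\<lambda>b. a * b)"

lemma fps_mult_mat_carrier [simp]: "fps_mult_mat n a \<in> carrier_mat n n"
  by (simp add: fps_mult_mat_def)

lemma dim_fps_mult_mat [simp]: "dim_row (fps_mult_mat n a) = n" "dim_col (fps_mult_mat n a) = n"
  by (simp_all add: fps_mult_mat_def)

lemma fps_mult_mat_mult_vec_carrier [simp]: "fps_mult_mat n a *\<^sub>v v \<in> carrier_vec n"
  unfolding carrier_vec_def by simp

lemma fps_mult_mat_mult_vec:
  "v \<in> carrier_vec n \<Longrightarrow> fps_mult_mat n a *\<^sub>v v = vec_of_fps n (a * fps_of_vec n v)"
  for a :: "'a::field fps"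
  by (simp add: fps_mult_mat_def op_mat_mult_vec)

lemma fps_mult_mat_mult: "fps_mult_mat n a * fps_mult_mat n b = fps_mult_mat n (a * b)"
  for a :: "'a::field fps"
  unfolding fps_mult_mat_def by (subst op_mat_mult) (auto intro!: op_mat_cong simp: mult.assoc)

lemma fps_mult_mat_cong: "fps_eq_below n a b \<Longrightarrow> fps_mult_mat n a = fps_mult_mat n b"
  unfolding fps_mult_mat_def by (rule op_mat_cong) (simp add: fps_eq_below_mult)

lemma fps_mult_mat_one: "fps_mult_mat n 1 = 1\<^sub>m n"
  by (simp add: fps_mult_mat_def op_mat_id)

lemma fps_mult_mat_add: "fps_mult_mat n (a + b) = fps_mult_mat n a + fps_mult_mat n b"
  by (simp add: fps_mult_mat_def distrib_right op_mat_add)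

lemma fps_mult_mat_smult: "fps_mult_mat n (fps_const c * a) = c \<cdot>\<^sub>m fps_mult_mat n a"
  by (simp add: fps_mult_mat_def mult.assoc op_mat_smult)

lemma fps_mult_mat_const: "fps_mult_mat n (fps_const c) = c \<cdot>\<^sub>m 1\<^sub>m n"
  using fps_mult_mat_smult[of n c 1] by (simp add: fps_mult_mat_one)

lemma fps_mult_mat_mult_vec_one: "fps_mult_mat n a *\<^sub>v vec_of_fps n 1 = vec_of_fps n a"
  for a :: "'a::field fps"
proof -
  have "fps_eq_below n (a * fps_of_vec n (vec_of_fps n 1)) (a * 1)"
    by (intro fps_eq_below_mult fps_of_vec_of_fps) simp
  then show ?thesis by (simp add: fps_mult_mat_mult_vec vec_of_fps_eq_iff)
qed

lemma fps_mult_mat_eq_iff: "fps_mult_mat n a = fps_mult_mat n b \<longleftrightarrow> fps_eq_below n a b"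
  for a :: "'a::field fps"
  by (metis fps_mult_mat_mult_vec_one vec_of_fps_eq_iff fps_mult_mat_cong)

lemma mat_commuting_with_fps_mult_mat:
  fixes \<sigma> :: "'a::field mat"
  assumes \<sigma>: "\<sigma> \<in> carrier_mat n n" and comm: "\<And>a. \<sigma> * fps_mult_mat n a = fps_mult_mat n a * \<sigma>"
  shows "\<sigma> = fps_mult_mat n (fps_of_vec n (\<sigma> *\<^sub>v vec_of_fps n 1))"
proof (rule eq_mat_by_mult_vecI[OF \<sigma> fps_mult_mat_carrier])
  fix v :: "'a vec" assume v: "v \<in> carrier_vec n"
  let ?w = "fps_of_vec n (\<sigma> *\<^sub>v vec_of_fps n 1)"
  have "\<sigma> *\<^sub>v v = \<sigma> *\<^sub>v (fps_mult_mat n (fps_of_vec n v) *\<^sub>v vec_of_fps n 1)"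
    by (simp add: fps_mult_mat_mult_vec_one vec_of_fps_of_vec[OF v])
  also have "\<dots> = fps_mult_mat n (fps_of_vec n v) *\<^sub>v (\<sigma> *\<^sub>v vec_of_fps n 1)"
    using \<sigma> by (simp flip: assoc_mult_mat_vec[of _ n n _ n] add: comm)
  also have "\<dots> = fps_mult_mat n ?w *\<^sub>v v"
    using \<sigma> v by (simp add: fps_mult_mat_mult_vec mult.commute)
  finally show "\<sigma> *\<^sub>v v = fps_mult_mat n ?w *\<^sub>v v" .
qed

section \<open>The form as a coefficient\<close>

lemma fps_const_prod: "fps_const (prod f S) = (\<Prod>x\<in>S. fps_const (f x) :: 'a::comm_ring_1 fps)"
  by (induction S rule: infinite_finite_induct) (auto simp flip: fps_const_mult)

lemma theta_cong: "(\<And>j. j < d \<Longrightarrow> u j = u' j) \<Longrightarrow> theta d n u = theta d n u'"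
  unfolding theta_def by (intro sum.cong refl prod.cong) auto

lemma theta_index_condition_iff:
  fixes p :: "nat \<Rightarrow> nat"
  assumes p: "\<And>j. j < d \<Longrightarrow> p j < n" and d: "d \<ge> 1"
  shows "(\<Sum>j<d. p j + 1) = (d - 1) * n + 1 \<longleftrightarrow> (\<Sum>j<d. n - 1 - p j) = n - 1"
proof -
  have n: "n \<ge> 1" using p[of 0] d by simp
  have "(\<Sum>j<d. n - 1 - p j) + (\<Sum>j<d. p j) = (\<Sum>j<d. n - 1)"
    by (simp only: sum.distrib[symmetric]) (intro sum.cong refl, auto dest: p)
  then have "(\<Sum>j<d. n - 1 - p j) + (\<Sum>j<d. p j) = d * (n - 1)"
    by simp
  moreover have "(\<Sum>j<d. p j + 1) = (\<Sum>j<d. p j) + d"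
    by (induction d) auto
  moreover have "(d - 1) * n + 1 + n = d * (n - 1) + d + 1"
    using d n by (cases d; cases n) (auto simp: algebra_simps)
  ultimately show ?thesis using n by linarith
qed

lemma theta_eq_coeff_prod:
  assumes u: "u \<in> args d n" and d: "d \<ge> 1"
  shows "theta d n u = fps_nth (\<Prod>j<d. fps_of_vec n (u j)) (n - 1)"
proof -
  define P where "P = PiE {..<d} (\<lambda>_. {..<n})"
  have "(\<Prod>j<d. fps_of_vec n (u j)) = (\<Prod>j<d. \<Sum>c<n. fps_const (u j $ c) * fps_X ^ (n - 1 - c))"
    using u by (simp add: args_def fps_of_vec_eq_sum)
  also have "\<dots> = (\<Sum>p\<in>P. \<Prod>j<d. fps_const (u j $ p j) * fps_X ^ (n - 1 - p j))"
    unfolding P_def by (rule prod_sum_PiE) auto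
  also have "\<dots> = (\<Sum>p\<in>P. fps_const (\<Prod>j<d. u j $ p j) * fps_X ^ (\<Sum>j<d. n - 1 - p j))"
    by (simp add: prod.distrib fps_const_prod power_sum)
  finally have "fps_nth (\<Prod>j<d. fps_of_vec n (u j)) (n - 1)
      = (\<Sum>p\<in>P. if (\<Sum>j<d. n - 1 - p j) = n - 1 then \<Prod>j<d. u j $ p j else 0)"
    by (auto simp: fps_sum_nth intro!: sum.cong)
  also have "\<dots> = (\<Sum>p\<in>P. if (\<Sum>j<d. p j + 1) = (d - 1) * n + 1 then \<Prod>j<d. u j $ p j else 0)"
  proof (intro sum.cong refl)
    fix p assume "p \<in> P"
    then have "(\<Sum>j<d. p j + 1) = (d - 1) * n + 1 \<longleftrightarrow> (\<Sum>j<d. n - 1 - p j) = n - 1"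
      using d by (intro theta_index_condition_iff) (auto simp: P_def)
    then show "(if (\<Sum>j<d. n - 1 - p j) = n - 1 then \<Prod>j<d. u j $ p j else 0)
        = (if (\<Sum>j<d. p j + 1) = (d - 1) * n + 1 then \<Prod>j<d. u j $ p j else 0)"
      by (simp only:)
  qed
  also have "\<dots> = theta d n u"
    by (simp add: theta_def P_def sum.inter_filter finite_PiE)
  finally show ?thesis ..
qed

definition padded_args :: "nat \<Rightarrow> nat \<Rightarrow> (nat \<Rightarrow> 'a::comm_ring_1 vec) \<Rightarrow> nat \<Rightarrow> 'a vec" where
  "padded_args n k u j = (if j < k then u j else vec_of_fps n 1)"

lemma padded_args_in_args: "(\<And>j. j < k \<Longrightarrow> u j \<in> carrier_vec n) \<Longrightarrow> padded_args n k u \<in> args d n"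
  by (simp add: args_def padded_args_def)

lemma padded_args_nth [simp]: "j < k \<Longrightarrow> padded_args n k u j = u j"
  by (simp add: padded_args_def)

lemma padded_args_upd: "i < k \<Longrightarrow> (padded_args n k u)(i := x) = padded_args n k (u(i := x))"
  by (auto simp: padded_args_def)

lemma prod_padded_args:
  assumes "k \<le> d"
  shows "fps_eq_below n (\<Prod>j<d. fps_of_vec n (padded_args n k u j)) (\<Prod>j<k. fps_of_vec n (u j))"
proof -
  let ?F = "\<lambda>j. fps_of_vec n (padded_args n k u j)"
  have "(\<Prod>j<d. ?F j) = (\<Prod>j<k. ?F j) * (\<Prod>j\<in>{k..<d}. ?F j)"
    using prod.atLeastLessThan_concat[of 0 k d ?F] assms by (simp add: lessThan_atLeast0)
  also have "\<dots> = (\<Prod>j<k. fps_of_vec n (u j)) * (\<Prod>j\<in>{k..<d}. fps_of_vec n (vec_of_fps n 1))"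
    by (intro arg_cong2[where f = "(*)"] prod.cong) (auto simp: padded_args_def)
  finally have "fps_eq_below n (\<Prod>j<d. ?F j) ((\<Prod>j<k. fps_of_vec n (u j)) * (\<Prod>j\<in>{k..<d}. 1))"
    by (metis fps_eq_below_mult fps_eq_below_prod fps_eq_below_refl fps_of_vec_of_fps)
  then show ?thesis by simp
qed


lemma theta_padded_args:
  assumes k: "1 \<le> k" "k \<le> d" and n: "n \<ge> 1" and u: "\<And>j. j < k \<Longrightarrow> u j \<in> carrier_vec n"
  shows "theta d n (padded_args n k u) = fps_nth (\<Prod>j<k. fps_of_vec n (u j)) (n - 1)"
proof -
  have "theta d n (padded_args n k u) = fps_nth (\<Prod>j<d. fps_of_vec n (padded_args n k u j)) (n - 1)"
    using k u by (intro theta_eq_coeff_prod padded_args_in_args) auto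
  also have "\<dots> = fps_nth (\<Prod>j<k. fps_of_vec n (u j)) (n - 1)"
    using n k by (intro fps_eq_below_nth[OF prod_padded_args]) auto
  finally show ?thesis .
qed

lemma prod_fps_of_vec_upd:
  fixes u :: "nat \<Rightarrow> 'a::comm_ring_1 vec"
  assumes "i < d"
  shows "(\<Prod>j<d. fps_of_vec n ((u(i := x)) j))
    = fps_of_vec n x * (\<Prod>j\<in>{..<d} - {i}. fps_of_vec n (u j))"
proof -
  have "(\<Prod>j<d. fps_of_vec n ((u(i := x)) j))
      = fps_of_vec n ((u(i := x)) i) * (\<Prod>j\<in>{..<d} - {i}. fps_of_vec n ((u(i := x)) j))"
    using assms by (intro prod.remove) auto
  also have "\<dots> = fps_of_vec n x * (\<Prod>j\<in>{..<d} - {i}. fps_of_vec n (u j))"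
    by (intro arg_cong2[where f = "(*)"] prod.cong) auto
  finally show ?thesis .
qed


lemma prod_fps_of_vec_upd_fps_mult_mat:
  fixes a :: "'a::field fps" and u :: "nat \<Rightarrow> 'a vec"
  assumes "i < d" "u i \<in> carrier_vec n"
  shows "fps_eq_below n (\<Prod>j<d. fps_of_vec n ((u(i := fps_mult_mat n a *\<^sub>v u i)) j))
    (a * (\<Prod>j<d. fps_of_vec n (u j)))"
proof -
  have "fps_eq_below n (fps_of_vec n (fps_mult_mat n a *\<^sub>v u i)) (a * fps_of_vec n (u i))"
    using assms(2) by (simp add: fps_mult_mat_mult_vec fps_of_vec_of_fps)
  then have "fps_eq_below n (\<Prod>j<d. fps_of_vec n ((u(i := fps_mult_mat n a *\<^sub>v u i)) j))
      (a * fps_of_vec n (u i) * (\<Prod>j\<in>{..<d} - {i}. fps_of_vec n (u j)))"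
    unfolding prod_fps_of_vec_upd[OF assms(1)] by (intro fps_eq_below_mult) auto
  also have "a * fps_of_vec n (u i) * (\<Prod>j\<in>{..<d} - {i}. fps_of_vec n (u j))
      = a * (\<Prod>j<d. fps_of_vec n (u j))"
    using prod.remove[of "{..<d}" i "\<lambda>j. fps_of_vec n (u j)"] assms(1) by (simp add: mult.assoc)
  finally show ?thesis .
qed


lemma theta_fps_mult_mat:
  fixes w :: "'a::field fps"
  assumes u: "u \<in> args d n" and d: "d \<ge> 1" and n: "n \<ge> 1"
  shows "theta d n (\<lambda>j. fps_mult_mat n w *\<^sub>v u j) = fps_nth (w ^ d * (\<Prod>j<d. fps_of_vec n (u j))) (n - 1)"
proof -
  have "theta d n (\<lambda>j. fps_mult_mat n w *\<^sub>v u j)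
      = fps_nth (\<Prod>j<d. fps_of_vec n (fps_mult_mat n w *\<^sub>v u j)) (n - 1)"
    using d by (intro theta_eq_coeff_prod) (auto simp: args_def)
  also have "\<dots> = fps_nth (\<Prod>j<d. w * fps_of_vec n (u j)) (n - 1)"
    using n u by (intro fps_eq_below_nth[of n] fps_eq_below_prod)
      (auto simp: args_def fps_mult_mat_mult_vec fps_of_vec_of_fps)
  finally show ?thesis by (simp add: prod.distrib)
qed


section \<open>The centre\<close>

lemma cent_carrier: "f \<in> cent d n \<Longrightarrow> f \<in> carrier_mat n n"
  by (simp add: cent_def)

lemma fps_mult_mat_in_cent:
  fixes a :: "'a::field fps"
  assumes d: "d \<ge> 2" and n: "n \<ge> 1"
  shows "fps_mult_mat n a \<in> cent d n"
proof -
  have "theta d n (u(i := fps_mult_mat n a *\<^sub>v u i)) = fps_nth (a * (\<Prod>j<d. fps_of_vec n (u j))) (n - 1)"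
    if u: "u \<in> args d n" and i: "i < d" for u i
  proof -
    have "theta d n (u(i := fps_mult_mat n a *\<^sub>v u i))
        = fps_nth (\<Prod>j<d. fps_of_vec n ((u(i := fps_mult_mat n a *\<^sub>v u i)) j)) (n - 1)"
      using u i by (intro theta_eq_coeff_prod) (auto simp: args_def)
    also have "\<dots> = fps_nth (a * (\<Prod>j<d. fps_of_vec n (u j))) (n - 1)"
      using u i n
      by (intro fps_eq_below_nth[OF prod_fps_of_vec_upd_fps_mult_mat]) (auto simp: args_def)
    finally show ?thesis .
  qed
  then show ?thesis
    using d unfolding cent_def by force
qed

lemma cent_imp_fps_mult_mat:
  fixes f :: "'a::field mat"
  assumes d: "d \<ge> 3" and n: "n \<ge> 1" and f: "f \<in> cent d n"
  shows "f = fps_mult_mat n (fps_of_vec n (f *\<^sub>v vec_of_fps n 1))"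
proof (rule eq_mat_by_mult_vecI[OF cent_carrier[OF f] fps_mult_mat_carrier])
  let ?one = "vec_of_fps n 1" and ?a = "fps_of_vec n (f *\<^sub>v vec_of_fps n 1)"
  have fc: "f \<in> carrier_mat n n" by (rule cent_carrier[OF f])
  fix v :: "'a vec" assume v: "v \<in> carrier_vec n"
  have "fps_eq_below n (fps_of_vec n (f *\<^sub>v v)) (?a * fps_of_vec n v)"
  proof (rule fps_eq_below_by_pairing)
    fix c :: "'a vec" assume c: "c \<in> carrier_vec n"
    \<comment> \<open>Test the centre condition on the arguments \<open>(1, v, c, 1, \<dots>, 1)\<close>.\<close>
    define w :: "nat \<Rightarrow> 'a vec" where "w = ((\<lambda>_. c)(0 := ?one, 1 := v))"
    have w: "w j \<in> carrier_vec n" for j using v c by (simp add: w_def)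
    have "padded_args n 3 w \<in> args d n" using w by (intro padded_args_in_args)
    then have "theta d n ((padded_args n 3 w)(0 := f *\<^sub>v padded_args n 3 w 0))
        = theta d n ((padded_args n 3 w)(1 := f *\<^sub>v padded_args n 3 w 1))"
      using f unfolding cent_def by blast
    then have "theta d n (padded_args n 3 (w(0 := f *\<^sub>v ?one)))
        = theta d n (padded_args n 3 (w(1 := f *\<^sub>v v)))"
      by (simp add: padded_args_upd w_def)
    moreover have "(w(0 := f *\<^sub>v ?one)) j \<in> carrier_vec n" "(w(1 := f *\<^sub>v v)) j \<in> carrier_vec n" for j
      using w v fc by auto
    ultimately have "fps_nth (\<Prod>j<3. fps_of_vec n ((w(0 := f *\<^sub>v ?one)) j)) (n - 1)
        = fps_nth (\<Prod>j<3. fps_of_vec n ((w(1 := f *\<^sub>v v)) j)) (n - 1)"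
      using d n by (simp add: theta_padded_args)
    then have "fps_nth (?a * fps_of_vec n v * fps_of_vec n c) (n - 1)
        = fps_nth (fps_of_vec n ?one * fps_of_vec n (f *\<^sub>v v) * fps_of_vec n c) (n - 1)"
      by (simp add: numeral_3_eq_3 w_def mult.assoc)
    also have "\<dots> = fps_nth (1 * fps_of_vec n (f *\<^sub>v v) * fps_of_vec n c) (n - 1)"
      using n by (intro fps_eq_below_nth[of n] fps_eq_below_mult fps_of_vec_of_fps) auto
    finally show "fps_nth (fps_of_vec n (f *\<^sub>v v) * fps_of_vec n c) (n - 1)
        = fps_nth (?a * fps_of_vec n v * fps_of_vec n c) (n - 1)"
      by simp
  qed
  then have "vec_of_fps n (fps_of_vec n (f *\<^sub>v v)) = vec_of_fps n (?a * fps_of_vec n v)"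
    by (simp only: vec_of_fps_eq_iff)
  moreover have "f *\<^sub>v v \<in> carrier_vec n" using fc v by simp
  ultimately show "f *\<^sub>v v = fps_mult_mat n ?a *\<^sub>v v"
    using v by (simp add: vec_of_fps_of_vec fps_mult_mat_mult_vec)
qed

lemma cent_eq_range_fps_mult_mat:
  "d \<ge> 3 \<Longrightarrow> n \<ge> 1 \<Longrightarrow> cent d n = range (fps_mult_mat n :: 'a::field fps \<Rightarrow> 'a mat)"
  using cent_imp_fps_mult_mat[of d n] fps_mult_mat_in_cent[of d n] by auto

section \<open>The three groups\<close>

lemma group_mu_grp:
  assumes d: "d \<ge> 1"
  shows "group (mu_grp d :: 'a::field monoid)"
proof (rule groupI)
  fix x :: 'a assume "x \<in> carrier (mu_grp d)"
  then have x: "x ^ d = 1" by (simp add: mu_grp_def)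
  then have "x \<noteq> 0" using d by (cases d) auto
  then have "inverse x ^ d = 1 \<and> inverse x * x = 1" using x by (simp add: power_inverse)
  then show "\<exists>y\<in>carrier (mu_grp d). y \<otimes>\<^bsub>mu_grp d\<^esub> x = \<one>\<^bsub>mu_grp d\<^esub>"
    by (auto simp: mu_grp_def)
qed (auto simp: mu_grp_def power_mult_distrib mult.assoc)

definition GL_grp :: "nat \<Rightarrow> 'a::field mat monoid" where
  "GL_grp n = units_of (ring_mat TYPE('a) n ())"

lemma group_GL_grp: "group (GL_grp n)"
proof -
  interpret semiring "ring_mat TYPE('a) n ()" by (rule semiring_mat)
  show ?thesis unfolding GL_grp_def by (rule units_group)
qed

lemma carrier_GL_grp: "carrier (GL_grp n) = {A \<in> carrier_mat n n. invertible_mat A}"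
proof (intro subset_antisym subsetI)
  fix A :: "'a mat"
  assume "A \<in> carrier (GL_grp n)"
  then obtain B where "A \<in> carrier_mat n n" "B \<in> carrier_mat n n" "A * B = 1\<^sub>m n" "B * A = 1\<^sub>m n"
    by (auto simp: GL_grp_def units_of_def Units_def ring_mat_def)
  then show "A \<in> {A \<in> carrier_mat n n. invertible_mat A}"
    by (auto simp: invertible_mat_def inverts_mat_def)
next
  fix A :: "'a mat"
  assume "A \<in> {A \<in> carrier_mat n n. invertible_mat A}"
  then obtain B where A: "A \<in> carrier_mat n n" and AB: "A * B = 1\<^sub>m n" and BA: "B * A = 1\<^sub>m (dim_row B)"
    by (auto simp: invertible_mat_def inverts_mat_def)
  have "dim_row B = n" using arg_cong[OF BA, of dim_col] A by simp
  moreover have "dim_col B = n" using arg_cong[OF AB, of dim_col] by simp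
  ultimately show "A \<in> carrier (GL_grp n)"
    using A AB BA by (auto simp: GL_grp_def units_of_def Units_def ring_mat_def)
qed

lemma GL_grp_simps [simp]: "mult (GL_grp n) = (*)" "one (GL_grp n) = 1\<^sub>m n"
  by (simp_all add: GL_grp_def units_of_def ring_mat_def)

lemma O_grp_simps [simp]:
  "carrier (O_grp d n) = orth d n" "mult (O_grp d n) = (*)" "one (O_grp d n) = 1\<^sub>m n"
  by (simp_all add: O_grp_def)

lemma O_grp_eq: "O_grp d n = (GL_grp n)\<lparr>carrier := orth d n\<rparr>"
  by (simp add: O_grp_def GL_grp_def units_of_def ring_mat_def)

lemma orth_iff: "\<sigma> \<in> orth d n \<longleftrightarrow>
    \<sigma> \<in> carrier (GL_grp n) \<and> (\<forall>u \<in> args d n. theta d n (\<lambda>j. \<sigma> *\<^sub>v u j) = theta d n u)"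
  by (auto simp: orth_def carrier_GL_grp)

lemma mult_mat_vec_args: "\<sigma> \<in> carrier_mat n n \<Longrightarrow> u \<in> args d n \<Longrightarrow> (\<lambda>j. \<sigma> *\<^sub>v u j) \<in> args d n"
  by (auto simp: args_def)

lemma theta_mult_mat_mult_vec:
  assumes "\<sigma> \<in> carrier_mat n n" "\<tau> \<in> carrier_mat n n" "u \<in> args d n"
  shows "theta d n (\<lambda>j. (\<sigma> * \<tau>) *\<^sub>v u j) = theta d n (\<lambda>j. \<sigma> *\<^sub>v (\<tau> *\<^sub>v u j))"
  using assms by (intro theta_cong) (auto simp: args_def)

lemma orth_carrier: "\<sigma> \<in> orth d n \<Longrightarrow> \<sigma> \<in> carrier_mat n n"
  by (simp add: orth_def)

lemma orth_theta: "\<sigma> \<in> orth d n \<Longrightarrow> u \<in> args d n \<Longrightarrow> theta d n (\<lambda>j. \<sigma> *\<^sub>v u j) = theta d n u"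
  by (simp add: orth_def)

lemma one_in_orth: "1\<^sub>m n \<in> orth d n"
proof -
  have "1\<^sub>m n \<in> carrier (GL_grp n :: 'a::field mat monoid)"
    by (auto simp: carrier_GL_grp invertible_mat_def inverts_mat_def intro!: exI[of _ "1\<^sub>m n"])
  moreover have "theta d n (\<lambda>j. (1\<^sub>m n :: 'a mat) *\<^sub>v u j) = theta d n u" if "u \<in> args d n" for u
    using that by (intro theta_cong) (auto simp: args_def)
  ultimately show ?thesis by (simp add: orth_iff)
qed

lemma orth_mult_closed:
  assumes \<sigma>: "\<sigma> \<in> orth d n" and \<tau>: "\<tau> \<in> orth d n"
  shows "\<sigma> * \<tau> \<in> orth d n"
proof -
  have "\<sigma> * \<tau> \<in> carrier (GL_grp n)"
    using \<sigma> \<tau> monoid.m_closed[OF group.is_monoid[OF group_GL_grp], of \<sigma> n \<tau>] by (simp add: orth_iff)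
  moreover have "theta d n (\<lambda>j. (\<sigma> * \<tau>) *\<^sub>v u j) = theta d n u" if u: "u \<in> args d n" for u
  proof -
    have "theta d n (\<lambda>j. (\<sigma> * \<tau>) *\<^sub>v u j) = theta d n (\<lambda>j. \<sigma> *\<^sub>v (\<tau> *\<^sub>v u j))"
      using \<sigma> \<tau> u by (simp add: theta_mult_mat_mult_vec orth_carrier)
    also have "\<dots> = theta d n u"
      using \<sigma> \<tau> u by (simp add: orth_theta orth_carrier mult_mat_vec_args)
    finally show ?thesis .
  qed
  ultimately show ?thesis by (simp add: orth_iff)
qed

lemma orth_inv_closed:
  assumes \<sigma>: "\<sigma> \<in> orth d n"
  shows "inv\<^bsub>GL_grp n\<^esub> \<sigma> \<in> orth d n"
proof -
  let ?\<tau> = "inv\<^bsub>GL_grp n\<^esub> \<sigma>"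
  have \<sigma>GL: "\<sigma> \<in> carrier (GL_grp n)" using \<sigma> by (simp add: orth_iff)
  then have \<tau>GL: "?\<tau> \<in> carrier (GL_grp n)" and \<sigma>\<tau>: "\<sigma> * ?\<tau> = 1\<^sub>m n"
    using group.inv_closed[OF group_GL_grp \<sigma>GL] group.r_inv[OF group_GL_grp \<sigma>GL] by simp_all
  have c: "\<sigma> \<in> carrier_mat n n" "?\<tau> \<in> carrier_mat n n"
    using \<sigma>GL \<tau>GL by (auto simp: carrier_GL_grp)
  have "theta d n (\<lambda>j. ?\<tau> *\<^sub>v u j) = theta d n u" if u: "u \<in> args d n" for u
  proof -
    have "theta d n (\<lambda>j. ?\<tau> *\<^sub>v u j) = theta d n (\<lambda>j. \<sigma> *\<^sub>v (?\<tau> *\<^sub>v u j))"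
      using orth_theta[OF \<sigma> mult_mat_vec_args[OF c(2) u]] by simp
    also have "\<dots> = theta d n (\<lambda>j. (\<sigma> * ?\<tau>) *\<^sub>v u j)"
      using theta_mult_mat_mult_vec[OF c u] by simp
    also have "\<dots> = theta d n u"
      using \<sigma>\<tau> u by (intro theta_cong) (auto simp: args_def)
    finally show ?thesis .
  qed
  then show ?thesis using \<tau>GL by (simp add: orth_iff)
qed

lemma orth_subgroup: "subgroup (orth d n) (GL_grp n :: 'a::field mat monoid)"
proof (rule group.subgroupI[OF group_GL_grp])
  show "orth d n \<subseteq> carrier (GL_grp n :: 'a mat monoid)"
    unfolding orth_def carrier_GL_grp by blast
  have "(1\<^sub>m n :: 'a mat) \<in> orth d n" by (rule one_in_orth)
  then show "orth d n \<noteq> ({} :: 'a mat set)" by blast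
  show "inv\<^bsub>GL_grp n\<^esub> \<sigma> \<in> orth d n" if "\<sigma> \<in> orth d n" for \<sigma> :: "'a mat"
    using that by (rule orth_inv_closed)
  show "\<sigma> \<otimes>\<^bsub>GL_grp n\<^esub> \<tau> \<in> orth d n" if "\<sigma> \<in> orth d n" "\<tau> \<in> orth d n" for \<sigma> \<tau> :: "'a mat"
    using orth_mult_closed[OF that] by simp
qed

lemma group_O_grp: "group (O_grp d n :: 'a::field mat monoid)"
  unfolding O_grp_eq by (rule subgroup.subgroup_is_group[OF orth_subgroup group_GL_grp])

lemma O_grp_inv:
  assumes "\<sigma> \<in> orth d n"
  shows "inv\<^bsub>O_grp d n\<^esub> \<sigma> \<in> orth d n" "inv\<^bsub>O_grp d n\<^esub> \<sigma> * \<sigma> = 1\<^sub>m n"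
    "\<sigma> * inv\<^bsub>O_grp d n\<^esub> \<sigma> = 1\<^sub>m n"
  using group.inv_closed[OF group_O_grp] group.l_inv[OF group_O_grp] group.r_inv[OF group_O_grp] assms
  by auto

lemma group_restrict_compose:
  assumes sub: "A \<subseteq> Bij S" and one: "restrict id S \<in> A"
    and mult: "\<And>\<phi> \<psi>. \<phi> \<in> A \<Longrightarrow> \<psi> \<in> A \<Longrightarrow> restrict (\<phi> \<circ> \<psi>) S \<in> A"
    and inv: "\<And>\<phi>. \<phi> \<in> A \<Longrightarrow> restrict (inv_into S \<phi>) S \<in> A"
  shows "group \<lparr>carrier = A, mult = \<lambda>\<phi> \<psi>. restrict (\<phi> \<circ> \<psi>) S, one = restrict id S\<rparr>"
proof -
  have compose: "restrict (\<phi> \<circ> \<psi>) S = compose S \<phi> \<psi>" for \<phi> \<psi> :: "'a \<Rightarrow> 'a"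
    by (simp add: compose_def comp_def)
  have id: "restrict id S = (\<lambda>x\<in>S. x)" by (simp add: id_def)
  show ?thesis
  proof (rule groupI, simp_all only: partial_object.simps monoid.simps compose id)
    fix \<phi> \<psi> \<chi> :: "'a \<Rightarrow> 'a" assume "\<phi> \<in> A" "\<psi> \<in> A" "\<chi> \<in> A"
    then have "\<chi> \<in> S \<rightarrow> S" using sub Bij_imp_funcset by blast
    then show "compose S (compose S \<phi> \<psi>) \<chi> = compose S \<phi> (compose S \<psi> \<chi>)"
      by (rule compose_assoc[symmetric])
  next
    fix \<phi> :: "'a \<Rightarrow> 'a" assume "\<phi> \<in> A"
    then have "\<phi> \<in> Bij S" using sub by blast
    then show "compose S (\<lambda>x\<in>S. x) \<phi> = \<phi>"
      by (intro Id_compose Bij_imp_funcset Bij_imp_extensional)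
    show "\<exists>\<psi>\<in>A. compose S \<psi> \<phi> = (\<lambda>x\<in>S. x)"
      using inv[OF \<open>\<phi> \<in> A\<close>] \<open>\<phi> \<in> A\<close> sub Bij_compose_restrict_eq by blast
  qed (use mult one in \<open>simp_all add: compose id\<close>)
qed

context
  fixes d n :: nat
  assumes d: "d \<ge> 3" and n: "n \<ge> 1"
begin

lemma cent_add: "f \<in> cent d n \<Longrightarrow> g \<in> cent d n \<Longrightarrow> f + g \<in> cent d n"
  unfolding cent_eq_range_fps_mult_mat[OF d n] by (auto simp flip: fps_mult_mat_add)

lemma cent_mult: "f \<in> cent d n \<Longrightarrow> g \<in> cent d n \<Longrightarrow> f * g \<in> cent d n"
  for f g :: "'a::field mat"
  unfolding cent_eq_range_fps_mult_mat[OF d n] by (auto simp: fps_mult_mat_mult)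

lemma cent_smult: "f \<in> cent d n \<Longrightarrow> c \<cdot>\<^sub>m f \<in> cent d n"
  unfolding cent_eq_range_fps_mult_mat[OF d n] by (auto simp flip: fps_mult_mat_smult)

lemma one_in_cent: "(1\<^sub>m n :: 'a::field mat) \<in> cent d n"
  unfolding cent_eq_range_fps_mult_mat[OF d n] by (auto simp flip: fps_mult_mat_one)

lemma algaut_subset_Bij: "algaut d n \<subseteq> Bij (cent d n)"
  by (auto simp: algaut_def Bij_def)

lemma restrict_id_in_algaut: "restrict id (cent d n) \<in> (algaut d n :: ('a::field mat \<Rightarrow> 'a mat) set)"
  by (auto simp: algaut_def bij_betw_def inj_on_def cent_add cent_mult cent_smult one_in_cent)

lemma algaut_compose:
  assumes \<phi>: "\<phi> \<in> algaut d n" and \<psi>: "\<psi> \<in> algaut d n"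
  shows "restrict (\<phi> \<circ> \<psi>) (cent d n) \<in> (algaut d n :: ('a::field mat \<Rightarrow> 'a mat) set)"
proof -
  have \<psi>C: "\<psi> f \<in> cent d n" if "f \<in> cent d n" for f
    using \<psi> that by (auto simp: algaut_def bij_betw_def)
  have "bij_betw (\<phi> \<circ> \<psi>) (cent d n) (cent d n)"
    using \<phi> \<psi> by (auto simp: algaut_def intro: bij_betw_trans)
  then have "bij_betw (restrict (\<phi> \<circ> \<psi>) (cent d n)) (cent d n) (cent d n)"
    by (rule bij_betw_cong[THEN iffD1, rotated]) simp
  then show ?thesis
    using \<phi> \<psi> \<psi>C by (simp add: algaut_def cent_add cent_mult cent_smult one_in_cent)
qed

lemma algaut_inv:
  assumes \<phi>: "\<phi> \<in> algaut d n"
  shows "restrict (inv_into (cent d n) \<phi>) (cent d n) \<in> (algaut d n :: ('a::field mat \<Rightarrow> 'a mat) set)"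
proof -
  let ?C = "cent d n :: 'a mat set"
  have Bij: "\<phi> \<in> Bij ?C" using \<phi> algaut_subset_Bij by blast
  have hom: "\<phi> (f + g) = \<phi> f + \<phi> g" "\<phi> (f * g) = \<phi> f * \<phi> g" "\<phi> (c \<cdot>\<^sub>m f) = c \<cdot>\<^sub>m \<phi> f"
    if "f \<in> ?C" "g \<in> ?C" for f g c
    using \<phi> that by (auto simp: algaut_def)
  have "inv_into ?C \<phi> (f + g) = inv_into ?C \<phi> f + inv_into ?C \<phi> g"
    "inv_into ?C \<phi> (f * g) = inv_into ?C \<phi> f * inv_into ?C \<phi> g"
    "inv_into ?C \<phi> (c \<cdot>\<^sub>m f) = c \<cdot>\<^sub>m inv_into ?C \<phi> f"
    if "f \<in> ?C" "g \<in> ?C" for f g c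
    using that Bij hom
    by (auto simp: cent_add cent_mult cent_smult intro!: Bij_inv_into_lemma[where g = "(+)"] Bij_inv_into_lemma[where g = "(*)"]
        Bij_inv_into_lemma[where g = "\<lambda>f _. c \<cdot>\<^sub>m f"])
  moreover have "inv_into ?C \<phi> (1\<^sub>m n) = 1\<^sub>m n"
    using \<phi> by (auto simp: algaut_def bij_betw_def one_in_cent intro: inv_into_f_eq)
  moreover have "bij_betw (restrict (inv_into ?C \<phi>) ?C) ?C ?C"
    using restrict_inv_into_Bij[OF Bij] by (simp add: Bij_def)
  ultimately show ?thesis
    by (simp add: algaut_def cent_add cent_mult cent_smult one_in_cent)
qed

lemma group_G_grp: "group (G_grp d n :: ('a::field mat \<Rightarrow> 'a mat) monoid)"
  unfolding G_grp_def
  by (rule group_restrict_compose[OF algaut_subset_Bij restrict_id_in_algaut algaut_compose algaut_inv])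

end

section \<open>The homomorphism \<open>\<chi>\<close> and its kernel\<close>

lemma mat_mult_cancel_left:
  fixes \<sigma> \<tau> A :: "'a::field mat"
  assumes "\<sigma> \<in> carrier_mat n n" "\<tau> \<in> carrier_mat n n" "\<tau> * \<sigma> = 1\<^sub>m n" "A \<in> carrier_mat n m"
  shows "\<tau> * (\<sigma> * A) = A"
proof -
  have "\<tau> * (\<sigma> * A) = (\<tau> * \<sigma>) * A" using assms by (metis assoc_mult_mat)
  then show ?thesis using assms by simp
qed

lemma mat_conj_hom:
  fixes \<sigma> \<tau> f g :: "'a::field mat"
  assumes \<sigma>: "\<sigma> \<in> carrier_mat n n" and \<tau>: "\<tau> \<in> carrier_mat n n" and \<tau>\<sigma>: "\<tau> * \<sigma> = 1\<^sub>m n"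
    and f: "f \<in> carrier_mat n n" and g: "g \<in> carrier_mat n n"
  shows "\<sigma> * (f + g) * \<tau> = \<sigma> * f * \<tau> + \<sigma> * g * \<tau>"
    and "\<sigma> * (f * g) * \<tau> = (\<sigma> * f * \<tau>) * (\<sigma> * g * \<tau>)"
proof -
  show "\<sigma> * (f + g) * \<tau> = \<sigma> * f * \<tau> + \<sigma> * g * \<tau>"
    using assms by (simp add: mult_add_distrib_mat[of _ n n] add_mult_distrib_mat[of _ n n])
  have "(\<sigma> * f * \<tau>) * (\<sigma> * g * \<tau>) = \<sigma> * (f * (\<tau> * (\<sigma> * (g * \<tau>))))"
    using assms by (simp add: assoc_mult_mat[of _ n n _ n _ n])
  also have "\<tau> * (\<sigma> * (g * \<tau>)) = g * \<tau>"
    using \<sigma> \<tau> \<tau>\<sigma> g by (intro mat_mult_cancel_left[of _ n _ _ n]) auto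
  finally show "\<sigma> * (f * g) * \<tau> = (\<sigma> * f * \<tau>) * (\<sigma> * g * \<tau>)"
    using assms by (simp add: assoc_mult_mat[of _ n n _ n _ n])
qed

lemma mat_conj_smult:
  fixes \<sigma> \<tau> f :: "'a::field mat"
  assumes "\<sigma> \<in> carrier_mat n n" "\<tau> \<in> carrier_mat n n" "f \<in> carrier_mat n n"
  shows "\<sigma> * (c \<cdot>\<^sub>m f) * \<tau> = c \<cdot>\<^sub>m (\<sigma> * f * \<tau>)"
  using assms by (simp add: mult_smult_distrib[of _ n n] mult_smult_assoc_mat[of _ n n])

lemma mat_conj_cancel:
  fixes \<sigma> \<tau> f :: "'a::field mat"
  assumes \<sigma>: "\<sigma> \<in> carrier_mat n n" and \<tau>: "\<tau> \<in> carrier_mat n n" and \<tau>\<sigma>: "\<tau> * \<sigma> = 1\<^sub>m n"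
    and f: "f \<in> carrier_mat n n"
  shows "\<tau> * (\<sigma> * f * \<tau>) * \<sigma> = f"
proof -
  have "\<tau> * (\<sigma> * f * \<tau>) * \<sigma> = \<tau> * (\<sigma> * (f * (\<tau> * \<sigma>)))"
    using assms by (simp only: assoc_mult_mat[of _ n n _ n _ n] mult_carrier_mat)
  also have "\<dots> = f"
    using assms by (simp add: mat_mult_cancel_left[OF \<sigma> \<tau> \<tau>\<sigma>, of _ n])
  finally show ?thesis .
qed

lemma conj_mem_cent:
  assumes \<sigma>: "\<sigma> \<in> orth d n" and f: "f \<in> cent d n"
  shows "\<sigma> * f * inv\<^bsub>O_grp d n\<^esub> \<sigma> \<in> cent d n"
proof -
  let ?\<tau> = "inv\<^bsub>O_grp d n\<^esub> \<sigma>"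
  let ?g = "\<sigma> * f * ?\<tau>"
  have \<tau>: "?\<tau> \<in> orth d n" and \<sigma>\<tau>: "\<sigma> * ?\<tau> = 1\<^sub>m n" using O_grp_inv[OF \<sigma>] by auto
  have c: "\<sigma> \<in> carrier_mat n n" "?\<tau> \<in> carrier_mat n n" "f \<in> carrier_mat n n"
    using \<sigma> \<tau> f by (auto simp: orth_carrier cent_carrier)
  have \<sigma>_\<tau>_cancel: "\<sigma> *\<^sub>v (?\<tau> *\<^sub>v x) = x" if "x \<in> carrier_vec n" for x
  proof -
    have "\<sigma> *\<^sub>v (?\<tau> *\<^sub>v x) = (\<sigma> * ?\<tau>) *\<^sub>v x"
      using c that by (metis assoc_mult_mat_vec)
    then show ?thesis using \<sigma>\<tau> that by simp
  qed
  have conj_expand: "?g *\<^sub>v x = \<sigma> *\<^sub>v (f *\<^sub>v (?\<tau> *\<^sub>v x))" if "x \<in> carrier_vec n" for x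
    using c that by (simp add: assoc_mult_mat_vec[of _ n n _ n])
  have "theta d n (u(0 := ?g *\<^sub>v u 0)) = theta d n (u(1 := ?g *\<^sub>v u 1))"
    if u: "u \<in> args d n" for u
  proof -
    define w where "w = (\<lambda>j. ?\<tau> *\<^sub>v u j)"
    have w: "w \<in> args d n" unfolding w_def by (rule mult_mat_vec_args[OF c(2) u])
    have transport: "theta d n (u(i := ?g *\<^sub>v u i)) = theta d n (w(i := f *\<^sub>v w i))" for i
    proof -
      have "theta d n (u(i := ?g *\<^sub>v u i)) = theta d n (\<lambda>j. \<sigma> *\<^sub>v ((w(i := f *\<^sub>v w i)) j))"
        using u unfolding w_def by (intro theta_cong) (auto simp: args_def \<sigma>_\<tau>_cancel conj_expand)
      also have "\<dots> = theta d n (w(i := f *\<^sub>v w i))"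
        using w c by (intro orth_theta[OF \<sigma>]) (auto simp: args_def)
      finally show ?thesis .
    qed
    have "theta d n (w(0 := f *\<^sub>v w 0)) = theta d n (w(1 := f *\<^sub>v w 1))"
      using f w unfolding cent_def by blast
    then show ?thesis by (simp only: transport)
  qed
  then show ?thesis using c by (simp add: cent_def)
qed

lemma chi_apply: "f \<in> cent d n \<Longrightarrow> chi d n \<sigma> f = \<sigma> * f * inv\<^bsub>O_grp d n\<^esub> \<sigma>"
  by (simp add: chi_def)


lemma chi_mult:
  assumes \<sigma>: "\<sigma> \<in> orth d n" and \<tau>: "\<tau> \<in> orth d n"
  shows "chi d n (\<sigma> * \<tau>) = restrict (chi d n \<sigma> \<circ> chi d n \<tau>) (cent d n)"
proof
  fix f :: "'a mat"
  show "chi d n (\<sigma> * \<tau>) f = restrict (chi d n \<sigma> \<circ> chi d n \<tau>) (cent d n) f"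
  proof (cases "f \<in> cent d n")
    case True
    let ?\<sigma>' = "inv\<^bsub>O_grp d n\<^esub> \<sigma>" and ?\<tau>' = "inv\<^bsub>O_grp d n\<^esub> \<tau>"
    have "inv\<^bsub>O_grp d n\<^esub> (\<sigma> * \<tau>) = ?\<tau>' * ?\<sigma>'"
      using group.inv_mult_group[OF group_O_grp, of \<sigma> d n \<tau>] \<sigma> \<tau> by simp
    moreover have "\<sigma> \<in> carrier_mat n n" "\<tau> \<in> carrier_mat n n" "?\<tau>' \<in> carrier_mat n n"
      "?\<sigma>' \<in> carrier_mat n n" "f \<in> carrier_mat n n"
      using \<sigma> \<tau> O_grp_inv(1)[OF \<sigma>] O_grp_inv(1)[OF \<tau>] True
      by (auto simp: orth_carrier cent_carrier)
    ultimately have "chi d n (\<sigma> * \<tau>) f = \<sigma> * (\<tau> * f * ?\<tau>') * ?\<sigma>'"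
      using True by (simp add: chi_apply assoc_mult_mat[of _ n n _ n _ n])
    then show ?thesis
      using True conj_mem_cent[OF \<tau> True] by (simp add: chi_apply)
  qed (simp add: chi_def)
qed


lemma chi_eq_id_iff:
  assumes \<sigma>: "\<sigma> \<in> orth d n"
  shows "chi d n \<sigma> = restrict id (cent d n) \<longleftrightarrow> (\<forall>f \<in> cent d n. \<sigma> * f = f * \<sigma>)"
proof -
  let ?\<tau> = "inv\<^bsub>O_grp d n\<^esub> \<sigma>"
  have c: "\<sigma> \<in> carrier_mat n n" "?\<tau> \<in> carrier_mat n n"
    using \<sigma> O_grp_inv(1)[OF \<sigma>] by (auto simp: orth_carrier)
  have "\<sigma> * f * ?\<tau> = f \<longleftrightarrow> \<sigma> * f = f * \<sigma>" if f: "f \<in> carrier_mat n n" for f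
  proof
    assume "\<sigma> * f * ?\<tau> = f"
    then have "\<sigma> * f * ?\<tau> * \<sigma> = f * \<sigma>" by simp
    then show "\<sigma> * f = f * \<sigma>"
      using c f O_grp_inv(2)[OF \<sigma>] by (simp add: assoc_mult_mat[of _ n n _ n _ n])
  next
    assume "\<sigma> * f = f * \<sigma>"
    then show "\<sigma> * f * ?\<tau> = f"
      using c f O_grp_inv(3)[OF \<sigma>] by (simp add: assoc_mult_mat[of _ n n _ n _ n])
  qed
  then show ?thesis
    by (auto simp: fun_eq_iff chi_def cent_carrier restrict_def)
qed


context
  fixes d n :: nat
  assumes d: "d \<ge> 3" and n: "n \<ge> 1"
begin

lemma chi_in_algaut:
  assumes \<sigma>: "\<sigma> \<in> orth d n"
  shows "chi d n (\<sigma> :: 'a::field mat) \<in> algaut d n"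
proof -
  let ?C = "cent d n :: 'a mat set" and ?\<tau> = "inv\<^bsub>O_grp d n\<^esub> \<sigma>"
  have \<tau>: "?\<tau> \<in> orth d n" and \<tau>\<sigma>: "?\<tau> * \<sigma> = 1\<^sub>m n" and \<sigma>\<tau>: "\<sigma> * ?\<tau> = 1\<^sub>m n"
    using O_grp_inv[OF \<sigma>] by auto
  have c: "\<sigma> \<in> carrier_mat n n" "?\<tau> \<in> carrier_mat n n" using \<sigma> \<tau> by (auto simp: orth_carrier)
  have \<tau>\<tau>: "inv\<^bsub>O_grp d n\<^esub> ?\<tau> = \<sigma>" using group.inv_inv[OF group_O_grp] \<sigma> by simp
  have "bij_betw (chi d n \<sigma>) ?C ?C"
  proof (rule bij_betwI[where g = "\<lambda>f. ?\<tau> * f * \<sigma>"])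
    show "chi d n \<sigma> \<in> ?C \<rightarrow> ?C" using conj_mem_cent[OF \<sigma>] by (auto simp: chi_apply)
    show "(\<lambda>f. ?\<tau> * f * \<sigma>) \<in> ?C \<rightarrow> ?C" using conj_mem_cent[OF \<tau>] \<tau>\<tau> by auto
    show "?\<tau> * chi d n \<sigma> f * \<sigma> = f" if "f \<in> ?C" for f
      using that mat_conj_cancel[OF c \<tau>\<sigma>] by (simp add: chi_apply cent_carrier)
    show "chi d n \<sigma> (?\<tau> * f * \<sigma>) = f" if "f \<in> ?C" for f
      using that conj_mem_cent[OF \<tau> that] \<tau>\<tau> mat_conj_cancel[OF c(2,1) \<sigma>\<tau>]
      by (simp add: chi_apply cent_carrier)
  qed
  moreover have "chi d n \<sigma> (1\<^sub>m n) = 1\<^sub>m n" using \<sigma>\<tau> c by (simp add: chi_apply one_in_cent[OF d n])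
  ultimately show ?thesis
    using mat_conj_hom[OF c \<tau>\<sigma>] mat_conj_smult[OF c]
    by (simp add: algaut_def chi_def cent_add[OF d n] cent_mult[OF d n] cent_smult[OF d n] cent_carrier)
qed

lemma chi_hom: "chi d n \<in> hom (O_grp d n :: 'a::field mat monoid) (G_grp d n)"
  by (rule homI) (simp_all add: G_grp_def chi_in_algaut chi_mult)

end

lemma fps_eq_below_deriv:
  "fps_eq_below n a b \<Longrightarrow> fps_eq_below (n - 1) (fps_deriv a) (fps_deriv b)"
  by (simp add: fps_eq_below_def)

lemma fps_power_eq_below_one_imp_const:
  fixes w :: "'a::field_char_0 fps"
  assumes w: "fps_eq_below n (w ^ d) 1" and d: "d \<ge> 1" and n: "n \<ge> 1"
  shows "fps_nth w 0 ^ d = 1" and "fps_eq_below n w (fps_const (fps_nth w 0))"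
proof -
  let ?\<zeta> = "fps_nth w 0"
  show \<zeta>: "?\<zeta> ^ d = 1"
    using fps_eq_below_nth[OF w, of 0] n by (simp add: fps_power_zeroth)
  have "?\<zeta> \<noteq> 0" using \<zeta> d by (cases d) auto
  \<comment> \<open>Differentiate: \<open>d w\<^sup>d\<^sup>-\<^sup>1 w' \<equiv> 0\<close>, and \<open>d w\<^sup>d\<^sup>-\<^sup>1\<close> is a unit in characteristic \<open>0\<close>.\<close>
  let ?u = "fps_const (of_nat d) * w ^ (d - 1)"
  have u0: "fps_nth ?u 0 \<noteq> 0"
    using \<open>?\<zeta> \<noteq> 0\<close> d by (simp add: fps_power_zeroth)
  have "fps_eq_below (n - 1) (fps_deriv (w ^ d)) 0"
    using fps_eq_below_deriv[OF w] by simp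
  then have "fps_eq_below (n - 1) (inverse ?u * (?u * fps_deriv w)) (inverse ?u * 0)"
    by (intro fps_eq_below_mult) (simp_all add: fps_deriv_power ac_simps)
  then have w': "fps_eq_below (n - 1) (fps_deriv w) 0"
    using inverse_mult_eq_1[OF u0] by (simp add: mult.assoc[symmetric])
  show "fps_eq_below n w (fps_const ?\<zeta>)"
    unfolding fps_eq_below_def
  proof (intro allI impI)
    fix e assume "e < n"
    show "fps_nth w e = fps_nth (fps_const ?\<zeta>) e"
    proof (cases e)
      case (Suc k)
      then have "of_nat (Suc k) * fps_nth w e = 0"
        using fps_eq_below_nth[OF w', of k] \<open>e < n\<close> by simp
      then show ?thesis using Suc by (simp del: of_nat_Suc)
    qed simp
  qed
qed

lemma fps_mult_mat_in_orth_imp_power_eq_one: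
  fixes w :: "'a::field fps"
  assumes w: "fps_mult_mat n w \<in> orth d n" and d: "d \<ge> 1" and n: "n \<ge> 1"
  shows "fps_eq_below n (w ^ d) 1"
proof (rule fps_eq_below_by_pairing)
  fix v :: "'a vec" assume v: "v \<in> carrier_vec n"
  let ?u = "padded_args n 1 (\<lambda>_. v)"
  have u: "?u \<in> args d n" using v by (intro padded_args_in_args)
  have P: "fps_eq_below n (\<Prod>j<d. fps_of_vec n (?u j)) (fps_of_vec n v)"
    using prod_padded_args[OF d, of n "\<lambda>_. v"] by simp
  have "fps_nth (w ^ d * fps_of_vec n v) (n - 1) = fps_nth (w ^ d * (\<Prod>j<d. fps_of_vec n (?u j))) (n - 1)"
    using P n by (intro fps_eq_below_nth[of n] fps_eq_below_mult) (auto intro: fps_eq_below_sym)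
  also have "\<dots> = theta d n (\<lambda>j. fps_mult_mat n w *\<^sub>v ?u j)"
    by (rule theta_fps_mult_mat[OF u d n, symmetric])
  also have "\<dots> = theta d n ?u" by (rule orth_theta[OF w u])
  also have "\<dots> = fps_nth (\<Prod>j<d. fps_of_vec n (?u j)) (n - 1)"
    by (rule theta_eq_coeff_prod[OF u d])
  also have "\<dots> = fps_nth (1 * fps_of_vec n v) (n - 1)"
    using fps_eq_below_nth[OF P] n by simp
  finally show "fps_nth (w ^ d * fps_of_vec n v) (n - 1) = fps_nth (1 * fps_of_vec n v) (n - 1)" .
qed

lemma iota_eq_fps_mult_mat: "iota n \<zeta> = fps_mult_mat n (fps_const \<zeta>)"
  by (simp add: iota_def fps_mult_mat_const)

lemma iota_mult: "iota n (\<zeta> * \<eta>) = iota n \<zeta> * iota n (\<eta> :: 'a::field)"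
  by (simp add: iota_eq_fps_mult_mat fps_mult_mat_mult flip: fps_const_mult)

lemma iota_in_orth:
  fixes \<zeta> :: "'a::field"
  assumes \<zeta>: "\<zeta> ^ d = 1" and d: "d \<ge> 1" and n: "n \<ge> 1"
  shows "iota n \<zeta> \<in> orth d n"
proof -
  have "\<zeta> \<noteq> 0" using \<zeta> d by (cases d) auto
  then have "iota n \<zeta> * iota n (inverse \<zeta>) = 1\<^sub>m n" "iota n (inverse \<zeta>) * iota n \<zeta> = 1\<^sub>m n"
    by (simp_all add: iota_eq_fps_mult_mat fps_mult_mat_mult fps_mult_mat_one)
  then have "invertible_mat (iota n \<zeta>)"
    by (auto simp: invertible_mat_def inverts_mat_def iota_eq_fps_mult_mat)
  moreover have "theta d n (\<lambda>j. iota n \<zeta> *\<^sub>v u j) = theta d n u" if u: "u \<in> args d n" for u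
    using theta_fps_mult_mat[OF u d n, of "fps_const \<zeta>"] theta_eq_coeff_prod[OF u d] \<zeta>
    by (simp add: iota_eq_fps_mult_mat fps_const_power)
  ultimately show ?thesis by (simp add: orth_def iota_eq_fps_mult_mat)
qed

lemma iota_commute: "f \<in> carrier_mat n n \<Longrightarrow> iota n \<zeta> * f = f * iota n \<zeta>"
  by (simp add: iota_def mult_smult_assoc_mat[of _ n n] mult_smult_distrib[of f n n "1\<^sub>m n" n])

lemma inj_on_iota: "n \<ge> 1 \<Longrightarrow> inj_on (iota n) (carrier (mu_grp d :: 'a::field monoid))"
proof (rule inj_onI)
  fix \<zeta> \<eta> :: 'a assume "n \<ge> 1" "iota n \<zeta> = iota n \<eta>"
  then have "iota n \<zeta> $$ (0, 0) = iota n \<eta> $$ (0, 0)" by simp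
  then show "\<zeta> = \<eta>" using \<open>n \<ge> 1\<close> by (simp add: iota_def)
qed

context
  fixes d n :: nat
  assumes d: "d \<ge> 3" and n: "n \<ge> 1"
begin

lemma iota_hom: "iota n \<in> hom (mu_grp d :: 'a::field monoid) (O_grp d n)"
  using d n by (intro homI) (simp_all add: mu_grp_def iota_in_orth iota_mult)

lemma chi_eq_id_imp_iota:
  assumes \<sigma>: "\<sigma> \<in> orth d n" and ker: "chi d n \<sigma> = restrict id (cent d n)"
  shows "\<exists>\<zeta>::'a::field_char_0. \<zeta> ^ d = 1 \<and> \<sigma> = iota n \<zeta>"
proof -
  have "\<sigma> * fps_mult_mat n a = fps_mult_mat n a * \<sigma>" for a
    using ker fps_mult_mat_in_cent[of d n a] d n by (simp add: chi_eq_id_iff[OF \<sigma>])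
  then obtain w where \<sigma>w: "\<sigma> = fps_mult_mat n w"
    using mat_commuting_with_fps_mult_mat[OF orth_carrier[OF \<sigma>]] by blast
  then have "fps_eq_below n (w ^ d) 1"
    using \<sigma> d n by (intro fps_mult_mat_in_orth_imp_power_eq_one) auto
  moreover have "d \<ge> 1" using d by simp
  ultimately have "fps_nth w 0 ^ d = 1" "fps_eq_below n w (fps_const (fps_nth w 0))"
    using fps_power_eq_below_one_imp_const n by auto
  then show ?thesis
    using \<sigma>w by (auto simp: iota_eq_fps_mult_mat fps_mult_mat_eq_iff)
qed

lemma kernel_chi:
  "kernel (O_grp d n) (G_grp d n) (chi d n) = iota n ` carrier (mu_grp d :: 'a::field_char_0 monoid)"
proof (intro subset_antisym subsetI)
  fix \<sigma> :: "'a mat"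
  assume "\<sigma> \<in> kernel (O_grp d n) (G_grp d n) (chi d n)"
  then have "\<sigma> \<in> orth d n" "chi d n \<sigma> = restrict id (cent d n)"
    by (auto simp: kernel_def G_grp_def)
  then show "\<sigma> \<in> iota n ` carrier (mu_grp d)"
    using chi_eq_id_imp_iota by (auto simp: mu_grp_def)
next
  fix \<sigma> :: "'a mat"
  assume "\<sigma> \<in> iota n ` carrier (mu_grp d)"
  then obtain \<zeta> where \<zeta>: "\<zeta> ^ d = 1" and \<sigma>: "\<sigma> = iota n \<zeta>" by (auto simp: mu_grp_def)
  then have "\<sigma> \<in> orth d n" using d n by (simp add: iota_in_orth)
  moreover have "chi d n \<sigma> = restrict id (cent d n)"
    unfolding chi_eq_id_iff[OF \<open>\<sigma> \<in> orth d n\<close>] using \<sigma> by (simp add: iota_commute cent_carrier)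
  ultimately show "\<sigma> \<in> kernel (O_grp d n) (G_grp d n) (chi d n)"
    by (simp add: kernel_def G_grp_def)
qed

end

section \<open>Surjectivity of \<open>\<chi>\<close>\<close>

lemma fps_eq_below_compose_truncation:
  assumes g0: "fps_nth g 0 = 0"
  shows "fps_eq_below n (a oo g) (\<Sum>e<n. fps_const (fps_nth a e) * g ^ e)"
  unfolding fps_eq_below_def
proof (intro allI impI)
  fix k assume k: "k < n"
  have "fps_nth (\<Sum>e<n. fps_const (fps_nth a e) * g ^ e) k = (\<Sum>e<n. fps_nth a e * fps_nth (g ^ e) k)"
    by (simp add: fps_sum_nth)
  also have "\<dots> = (\<Sum>e\<in>{0..k}. fps_nth a e * fps_nth (g ^ e) k)"
    using k startsby_zero_power_prefix[OF g0]
    by (intro sum.mono_neutral_right) auto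
  finally show "fps_nth (a oo g) k = fps_nth (\<Sum>e<n. fps_const (fps_nth a e) * g ^ e) k"
    by (simp add: fps_compose_nth)
qed

definition fps_trunc_hom :: "nat \<Rightarrow> ('a::comm_ring_1 fps \<Rightarrow> 'a fps) \<Rightarrow> bool" where
  "fps_trunc_hom n P \<longleftrightarrow> respects_fps_eq_below n P
     \<and> (\<forall>a b. fps_eq_below n (P (a + b)) (P a + P b))
     \<and> (\<forall>a b. fps_eq_below n (P (a * b)) (P a * P b))
     \<and> (\<forall>c a. fps_eq_below n (P (fps_const c * a)) (fps_const c * P a))
     \<and> fps_eq_below n (P 1) 1"

context
  fixes n :: nat and P :: "'a::idom fps \<Rightarrow> 'a fps"
  assumes P: "fps_trunc_hom n P"
begin

lemma fps_trunc_hom_cong: "fps_eq_below n a b \<Longrightarrow> fps_eq_below n (P a) (P b)"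
  using P by (simp add: fps_trunc_hom_def respects_fps_eq_below_def)

lemma fps_trunc_hom_zero: "fps_eq_below n (P 0) 0"
proof -
  have "fps_eq_below n (P 0) (P 0 + P 0)"
    using P by (metis fps_trunc_hom_def add_0)
  then have "fps_nth (P 0) e = fps_nth (P 0) e + fps_nth (P 0) e" if "e < n" for e
    using that unfolding fps_eq_below_def fps_add_nth by blast
  then show ?thesis
    unfolding fps_eq_below_def fps_zero_nth by (metis add_cancel_right_right)
qed

lemma fps_trunc_hom_power: "fps_eq_below n (P (a ^ k)) (P a ^ k)"
proof (induction k)
  case 0
  then show ?case using P by (simp add: fps_trunc_hom_def)
next
  case (Suc k)
  have "fps_eq_below n (P (a * a ^ k)) (P a * P (a ^ k))"
    using P by (simp add: fps_trunc_hom_def)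
  also have "fps_eq_below n \<dots> (P a * P a ^ k)"
    by (intro fps_eq_below_mult Suc.IH fps_eq_below_refl)
  finally show ?case by simp
qed

lemma fps_trunc_hom_sum:
  "fps_eq_below n (P (\<Sum>e\<in>S. fps_const (c e) * a ^ e)) (\<Sum>e\<in>S. fps_const (c e) * P a ^ e)"
proof (induction S rule: infinite_finite_induct)
  case (insert x S)
  have "fps_eq_below n (P (\<Sum>e\<in>insert x S. fps_const (c e) * a ^ e))
      (P (fps_const (c x) * a ^ x) + P (\<Sum>e\<in>S. fps_const (c e) * a ^ e))"
    using P insert.hyps by (simp add: fps_trunc_hom_def)
  also have "fps_eq_below n \<dots> (fps_const (c x) * P (a ^ x) + (\<Sum>e\<in>S. fps_const (c e) * P a ^ e))"
    using P insert.IH by (intro fps_eq_below_add) (simp_all add: fps_trunc_hom_def)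
  also have "fps_eq_below n \<dots> (fps_const (c x) * P a ^ x + (\<Sum>e\<in>S. fps_const (c e) * P a ^ e))"
    by (intro fps_eq_below_add fps_eq_below_mult fps_trunc_hom_power fps_eq_below_refl)
  finally show ?case using insert.hyps by simp
qed (use fps_trunc_hom_zero in simp_all)

lemma fps_trunc_hom_X_nth_0:
  assumes n: "n \<ge> 1"
  shows "fps_nth (P fps_X) 0 = 0"
proof -
  have "fps_eq_below n (P fps_X ^ n) (P (fps_X ^ n))"
    by (rule fps_eq_below_sym[OF fps_trunc_hom_power])
  also have "fps_eq_below n \<dots> (P 0)"
    by (rule fps_trunc_hom_cong) (simp add: fps_eq_below_def)
  also have "fps_eq_below n \<dots> 0" by (rule fps_trunc_hom_zero)
  finally have "fps_nth (P fps_X ^ n) 0 = 0"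
    using n by (simp add: fps_eq_below_def)
  then show ?thesis by (simp add: fps_power_zeroth)
qed

lemma fps_trunc_hom_eq_compose:
  assumes n: "n \<ge> 1"
  shows "fps_eq_below n (P a) (a oo P fps_X)"
proof -
  have "fps_eq_below n (P a) (P (\<Sum>e<n. fps_const (fps_nth a e) * fps_X ^ e))"
    by (rule fps_trunc_hom_cong[OF fps_eq_below_truncation])
  also have "fps_eq_below n \<dots> (\<Sum>e<n. fps_const (fps_nth a e) * P fps_X ^ e)"
    by (rule fps_trunc_hom_sum)
  also have "fps_eq_below n \<dots> (a oo P fps_X)"
    by (rule fps_eq_below_sym[OF fps_eq_below_compose_truncation[OF fps_trunc_hom_X_nth_0[OF n]]])
  finally show ?thesis .
qed

end

definition induced_fps_map :: "nat \<Rightarrow> ('a::field mat \<Rightarrow> 'a mat) \<Rightarrow> 'a fps \<Rightarrow> 'a fps" where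
  "induced_fps_map n \<phi> a = fps_of_vec n (\<phi> (fps_mult_mat n a) *\<^sub>v vec_of_fps n 1)"

context
  fixes d n :: nat and \<phi> :: "'a::field mat \<Rightarrow> 'a mat"
  assumes d: "d \<ge> 3" and n: "n \<ge> 2" and \<phi>: "\<phi> \<in> algaut d n"
begin

lemma algaut_fps_mult_mat: "\<phi> (fps_mult_mat n a) = fps_mult_mat n (induced_fps_map n \<phi> a)"
proof -
  have "\<phi> (fps_mult_mat n a) \<in> cent d n"
    using \<phi> fps_mult_mat_in_cent[of d n a] d n by (auto simp: algaut_def bij_betw_def)
  then show ?thesis
    unfolding induced_fps_map_def using d n by (intro cent_imp_fps_mult_mat) auto
qed


lemma induced_fps_map_eq_below_iff:
  "fps_eq_below n (induced_fps_map n \<phi> a) b \<longleftrightarrow> \<phi> (fps_mult_mat n a) = fps_mult_mat n b"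
  by (simp add: algaut_fps_mult_mat fps_mult_mat_eq_iff)

lemma fps_trunc_hom_induced_fps_map: "fps_trunc_hom n (induced_fps_map n \<phi>)"
proof -
  have M: "fps_mult_mat n a \<in> cent d n" for a :: "'a fps"
    using fps_mult_mat_in_cent[of d n a] d n by auto
  have hom: "\<phi> (f + g) = \<phi> f + \<phi> g" "\<phi> (f * g) = \<phi> f * \<phi> g"
    if "f \<in> cent d n" "g \<in> cent d n" for f g
    using \<phi> that by (auto simp: algaut_def)
  have hom_smult: "\<phi> (c \<cdot>\<^sub>m f) = c \<cdot>\<^sub>m \<phi> f" if "f \<in> cent d n" for f c
    using \<phi> that by (auto simp: algaut_def)
  have "respects_fps_eq_below n (induced_fps_map n \<phi>)"
    by (simp add: respects_fps_eq_below_def induced_fps_map_def fps_mult_mat_cong)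
  moreover have "fps_eq_below n (induced_fps_map n \<phi> (a + b)) (induced_fps_map n \<phi> a + induced_fps_map n \<phi> b)"
    for a b
    unfolding induced_fps_map_eq_below_iff by (simp add: fps_mult_mat_add hom M algaut_fps_mult_mat)
  moreover have "fps_eq_below n (induced_fps_map n \<phi> (a * b)) (induced_fps_map n \<phi> a * induced_fps_map n \<phi> b)"
    for a b
    unfolding induced_fps_map_eq_below_iff
    by (simp add: fps_mult_mat_mult[symmetric] hom M algaut_fps_mult_mat)
  moreover have "fps_eq_below n (induced_fps_map n \<phi> (fps_const c * a)) (fps_const c * induced_fps_map n \<phi> a)"
    for c a
    unfolding induced_fps_map_eq_below_iff by (simp add: fps_mult_mat_smult hom_smult M algaut_fps_mult_mat)
  moreover have "fps_eq_below n (induced_fps_map n \<phi> 1) 1"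
    unfolding induced_fps_map_eq_below_iff using \<phi> by (simp add: fps_mult_mat_one algaut_def)
  ultimately show ?thesis by (simp add: fps_trunc_hom_def)
qed


lemma induced_fps_map_X_nth_0: "fps_nth (induced_fps_map n \<phi> fps_X) 0 = 0"
  using fps_trunc_hom_X_nth_0[OF fps_trunc_hom_induced_fps_map] n by simp

lemma algaut_eq_compose:
  "\<phi> (fps_mult_mat n a) = fps_mult_mat n (a oo induced_fps_map n \<phi> fps_X)"
  using fps_mult_mat_cong[OF fps_trunc_hom_eq_compose[OF fps_trunc_hom_induced_fps_map]] n
  by (simp add: algaut_fps_mult_mat)

lemma induced_fps_map_X_nth_1: "fps_nth (induced_fps_map n \<phi> fps_X) 1 \<noteq> 0"
proof -
  let ?g = "induced_fps_map n \<phi> fps_X"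
  have "fps_mult_mat n (fps_X :: 'a fps) \<in> cent d n"
    using d n by (intro fps_mult_mat_in_cent) auto
  moreover have "\<phi> ` cent d n = cent d n"
    using \<phi> unfolding algaut_def bij_betw_def by blast
  ultimately obtain f where f: "f \<in> cent d n" "\<phi> f = fps_mult_mat n fps_X"
    by (metis imageE)
  define b where "b = fps_of_vec n (f *\<^sub>v vec_of_fps n 1)"
  have "f = fps_mult_mat n b"
    unfolding b_def using d n f(1) by (intro cent_imp_fps_mult_mat) auto
  with f(2) have "\<phi> (fps_mult_mat n b) = fps_mult_mat n fps_X" by simp
  then have "fps_eq_below n (b oo ?g) fps_X"
    by (simp add: algaut_eq_compose fps_mult_mat_eq_iff)
  then have "fps_nth (b oo ?g) 1 = 1" using n by (simp add: fps_eq_below_def)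
  moreover have "fps_nth (b oo ?g) 1 = fps_nth b 1 * fps_nth ?g 1"
    using induced_fps_map_X_nth_0 by (simp add: fps_compose_nth)
  ultimately show ?thesis by auto
qed

end

definition twisted_subst :: "'a::comm_ring_1 fps \<Rightarrow> 'a fps \<Rightarrow> 'a fps \<Rightarrow> 'a fps" where
  "twisted_subst w g b = w * (b oo g)"

lemma fps_linear_twisted_subst: "fps_linear (twisted_subst w g)"
  unfolding fps_linear_def twisted_subst_def
  by (simp add: fps_compose_add_distrib distrib_left mult.left_commute flip: fps_const_mult_apply_left)

lemma respects_fps_eq_below_twisted_subst:
  "fps_nth g 0 = 0 \<Longrightarrow> respects_fps_eq_below n (twisted_subst w g)"
  unfolding respects_fps_eq_below_def twisted_subst_def
  by (auto intro: fps_eq_below_mult fps_eq_below_compose)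

lemma fps_inv_nth_0: "fps_nth (fps_inv g) 0 = 0"
  by (simp add: fps_inv_def)

context
  fixes g w :: "'a::field fps"
  assumes g0: "fps_nth g 0 = 0" and g1: "fps_nth g 1 \<noteq> 0" and w0: "fps_nth w 0 \<noteq> 0"
begin

lemma twisted_subst_inverse:
  "twisted_subst w g (twisted_subst (inverse w oo fps_inv g) (fps_inv g) c) = c"
  "twisted_subst (inverse w oo fps_inv g) (fps_inv g) (twisted_subst w g c) = c"
proof -
  let ?h = "fps_inv g"
  have hg: "x oo ?h oo g = x" and gh: "x oo g oo ?h = x" for x :: "'a fps"
    by (simp_all flip: fps_compose_assoc add: g0 fps_inv_nth_0 fps_inv[OF g0 g1] fps_inv_right[OF g0 g1])
  show "twisted_subst w g (twisted_subst (inverse w oo ?h) ?h c) = c"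
    using w0 by (simp add: twisted_subst_def fps_compose_mult_distrib[OF g0] hg inverse_mult_eq_1')
  have "twisted_subst (inverse w oo ?h) ?h (twisted_subst w g c) = (inverse w * w oo ?h) * c"
    by (simp add: twisted_subst_def fps_compose_mult_distrib[OF fps_inv_nth_0] gh ac_simps)
  then show "twisted_subst (inverse w oo ?h) ?h (twisted_subst w g c) = c"
    using w0 by (simp add: inverse_mult_eq_1)
qed

lemma op_mat_twisted_subst_in_GL: "op_mat n (twisted_subst w g) \<in> carrier (GL_grp n)"
proof -
  let ?\<sigma> = "twisted_subst w g" and ?\<tau> = "twisted_subst (inverse w oo fps_inv g) (fps_inv g)"
  have "op_mat n ?\<sigma> * op_mat n ?\<tau> = op_mat n (\<lambda>c. ?\<sigma> (?\<tau> c))"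
    by (rule op_mat_mult[OF fps_linear_twisted_subst fps_linear_twisted_subst
          respects_fps_eq_below_twisted_subst[OF g0]])
  moreover have "op_mat n ?\<tau> * op_mat n ?\<sigma> = op_mat n (\<lambda>c. ?\<tau> (?\<sigma> c))"
    by (rule op_mat_mult[OF fps_linear_twisted_subst fps_linear_twisted_subst
          respects_fps_eq_below_twisted_subst[OF fps_inv_nth_0]])
  ultimately have "op_mat n ?\<sigma> * op_mat n ?\<tau> = 1\<^sub>m n" "op_mat n ?\<tau> * op_mat n ?\<sigma> = 1\<^sub>m n"
    by (simp_all only: twisted_subst_inverse op_mat_id)
  then show ?thesis
    by (auto simp: carrier_GL_grp invertible_mat_def inverts_mat_def)
qed

lemma op_mat_twisted_subst_fps_mult_mat:
  "op_mat n (twisted_subst w g) * fps_mult_mat n a = fps_mult_mat n (a oo g) * op_mat n (twisted_subst w g)"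
proof -
  have "op_mat n (twisted_subst w g) * fps_mult_mat n a = op_mat n (\<lambda>c. twisted_subst w g (a * c))"
    unfolding fps_mult_mat_def
    by (rule op_mat_mult[OF fps_linear_twisted_subst fps_linear_mult_left respects_fps_eq_below_twisted_subst[OF g0]])
  also have "\<dots> = op_mat n (\<lambda>c. (a oo g) * twisted_subst w g c)"
    by (rule op_mat_cong) (simp add: twisted_subst_def fps_compose_mult_distrib[OF g0] ac_simps)
  also have "\<dots> = fps_mult_mat n (a oo g) * op_mat n (twisted_subst w g)"
    unfolding fps_mult_mat_def
    by (rule op_mat_mult[OF fps_linear_mult_left fps_linear_twisted_subst respects_fps_eq_below_mult_left, symmetric])
  finally show ?thesis .
qed

end

text \<open>Under the pairing \<open>(a, c) \<mapsto> (a * c)$(n - 1)\<close> the series \<open>compose_dual n h\<close> represents the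
  linear form \<open>c \<mapsto> (c oo h)$(n - 1)\<close>.\<close>

definition compose_dual :: "nat \<Rightarrow> 'a::comm_ring_1 fps \<Rightarrow> 'a fps" where
  "compose_dual n h = Abs_fps (\<lambda>i. if i < n then fps_nth (h ^ (n - 1 - i)) (n - 1) else 0)"

lemma compose_dual_pairing:
  assumes "n \<ge> 1"
  shows "fps_nth (compose_dual n h * c) (n - 1) = fps_nth (c oo h) (n - 1)"
proof -
  define f where "f = (\<lambda>i. fps_nth (h ^ i) (n - 1) * fps_nth c i)"
  have "fps_nth (compose_dual n h * c) (n - 1) = (\<Sum>i=0..n - 1. f (n - 1 + 0 - i))"
    unfolding fps_mult_nth f_def using assms by (intro sum.cong) (auto simp: compose_dual_def)
  also have "\<dots> = (\<Sum>i=0..n - 1. f i)" by (rule sum.atLeastAtMost_rev[symmetric])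
  also have "\<dots> = fps_nth (c oo h) (n - 1)" by (simp add: f_def fps_compose_nth mult.commute)
  finally show ?thesis .
qed

lemma compose_dual_nth_0:
  fixes h :: "'a::idom fps"
  shows "fps_nth h 0 = 0 \<Longrightarrow> fps_nth h 1 \<noteq> 0 \<Longrightarrow> n \<ge> 1 \<Longrightarrow> fps_nth (compose_dual n h) 0 \<noteq> 0"
  by (simp add: compose_dual_def startsby_zero_power_nth_same)

lemma fps_nth_root_exists:
  fixes U :: "'a::{field_char_0, alg_closed_field} fps"
  assumes U0: "fps_nth U 0 \<noteq> 0" and d: "d \<ge> 1"
  shows "\<exists>w. w ^ d = U \<and> fps_nth w 0 \<noteq> 0"
proof -
  obtain k where k: "d = Suc k" using d by (cases d) auto
  define r where "r = (\<lambda>(k::nat) (x::'a). SOME y. y ^ k = x)"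
  have "\<exists>y. y ^ Suc k = fps_nth U 0" by (rule nth_root_exists) simp
  then have "r (Suc k) (fps_nth U 0) ^ Suc k = fps_nth U 0" unfolding r_def by (rule someI_ex)
  then have w: "fps_radical r (Suc k) U ^ Suc k = U" using power_radical[OF U0] by blast
  have "fps_nth (fps_radical r (Suc k) U) 0 \<noteq> 0"
  proof
    assume "fps_nth (fps_radical r (Suc k) U) 0 = 0"
    then have "fps_nth (fps_radical r (Suc k) U ^ Suc k) 0 = 0"
      by (simp only: fps_power_zeroth) simp
    then show False using U0 by (simp only: w)
  qed
  then show ?thesis using w k by blast
qed

lemma theta_op_mat_twisted_subst:
  fixes g w :: "'a::field fps"
  assumes g0: "fps_nth g 0 = 0" and g1: "fps_nth g 1 \<noteq> 0"
    and wd: "w ^ d = compose_dual n (fps_inv g)"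
    and u: "u \<in> args d n" and d: "d \<ge> 1" and n: "n \<ge> 1"
  shows "theta d n (\<lambda>j. op_mat n (twisted_subst w g) *\<^sub>v u j) = theta d n u"
proof -
  let ?P = "\<Prod>j<d. fps_of_vec n (u j)" and ?\<sigma> = "op_mat n (twisted_subst w g)"
  have uc: "u j \<in> carrier_vec n" if "j < d" for j using u that by (simp add: args_def)
  have "theta d n (\<lambda>j. ?\<sigma> *\<^sub>v u j) = fps_nth (\<Prod>j<d. fps_of_vec n (?\<sigma> *\<^sub>v u j)) (n - 1)"
    using d by (intro theta_eq_coeff_prod mult_mat_vec_args[OF op_mat_carrier u])
  also have "\<dots> = fps_nth (\<Prod>j<d. w * (fps_of_vec n (u j) oo g)) (n - 1)"
  proof (intro fps_eq_below_nth[of n] fps_eq_below_prod)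
    fix j assume "j \<in> {..<d}"
    then have "?\<sigma> *\<^sub>v u j = vec_of_fps n (w * (fps_of_vec n (u j) oo g))"
      using uc by (simp add: op_mat_mult_vec[OF fps_linear_twisted_subst] twisted_subst_def)
    then show "fps_eq_below n (fps_of_vec n (?\<sigma> *\<^sub>v u j)) (w * (fps_of_vec n (u j) oo g))"
      by (simp only: fps_of_vec_of_fps)
  qed (use n in simp)
  also have "(\<Prod>j<d. w * (fps_of_vec n (u j) oo g)) = compose_dual n (fps_inv g) * (?P oo g)"
    by (simp add: prod.distrib fps_compose_prod_distrib[OF g0] wd)
  also have "fps_nth \<dots> (n - 1) = fps_nth ((?P oo g) oo fps_inv g) (n - 1)"
    by (rule compose_dual_pairing[OF n])
  also have "(?P oo g) oo fps_inv g = ?P"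
    by (simp add: fps_compose_assoc[OF fps_inv_nth_0 g0, symmetric] fps_inv_right[OF g0 g1])
  also have "fps_nth ?P (n - 1) = theta d n u"
    by (rule theta_eq_coeff_prod[OF u d, symmetric])
  finally show ?thesis .
qed

lemma op_mat_twisted_subst_in_orth:
  fixes g w :: "'a::field fps"
  assumes g0: "fps_nth g 0 = 0" and g1: "fps_nth g 1 \<noteq> 0" and w0: "fps_nth w 0 \<noteq> 0"
    and wd: "w ^ d = compose_dual n (fps_inv g)" and d: "d \<ge> 1" and n: "n \<ge> 1"
  shows "op_mat n (twisted_subst w g) \<in> orth d n"
  using op_mat_twisted_subst_in_GL[OF g0 g1 w0] theta_op_mat_twisted_subst[OF g0 g1 wd _ d n]
  by (simp add: orth_iff)

lemma chi_op_mat_twisted_subst: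
  fixes g w :: "'a::field fps"
  assumes g0: "fps_nth g 0 = 0" and g1: "fps_nth g 1 \<noteq> 0" and w0: "fps_nth w 0 \<noteq> 0"
    and \<sigma>: "op_mat n (twisted_subst w g) \<in> orth d n" and a: "fps_mult_mat n a \<in> cent d n"
  shows "chi d n (op_mat n (twisted_subst w g)) (fps_mult_mat n a) = fps_mult_mat n (a oo g)"
proof -
  let ?\<sigma> = "op_mat n (twisted_subst w g)"
  let ?\<tau> = "inv\<^bsub>O_grp d n\<^esub> ?\<sigma>"
  have \<tau>: "?\<tau> \<in> carrier_mat n n" using O_grp_inv(1)[OF \<sigma>] by (rule orth_carrier)
  have "chi d n ?\<sigma> (fps_mult_mat n a) = ?\<sigma> * fps_mult_mat n a * ?\<tau>"
    using a by (rule chi_apply)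
  also have "\<dots> = fps_mult_mat n (a oo g) * (?\<sigma> * ?\<tau>)"
    using \<tau> by (simp add: op_mat_twisted_subst_fps_mult_mat[OF g0 g1 w0] assoc_mult_mat[of _ n n _ n _ n])
  also have "\<dots> = fps_mult_mat n (a oo g)"
    using O_grp_inv(3)[OF \<sigma>] by simp
  finally show ?thesis .
qed

lemma exists_orth_chi_eq:
  fixes \<phi> :: "'a::{alg_closed_field, field_char_0} mat \<Rightarrow> 'a mat"
  assumes d: "d \<ge> 3" and n: "n \<ge> 2" and \<phi>: "\<phi> \<in> algaut d n"
  shows "\<exists>\<sigma> \<in> orth d n. chi d n \<sigma> = \<phi>"
proof -
  define g where "g = induced_fps_map n \<phi> fps_X"
  have g0: "fps_nth g 0 = 0" and g1: "fps_nth g 1 \<noteq> 0"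
    using induced_fps_map_X_nth_0[OF d n \<phi>] induced_fps_map_X_nth_1[OF d n \<phi>] by (simp_all add: g_def)
  have "fps_nth (fps_inv g) 1 \<noteq> 0" using g1 by (simp add: fps_inv_def)
  then have "fps_nth (compose_dual n (fps_inv g)) 0 \<noteq> 0"
    using n by (intro compose_dual_nth_0[OF fps_inv_nth_0]) simp_all
  then obtain w where wd: "w ^ d = compose_dual n (fps_inv g)" and w0: "fps_nth w 0 \<noteq> 0"
    using fps_nth_root_exists d by (metis le_trans one_le_numeral)
  define \<sigma> where "\<sigma> = op_mat n (twisted_subst w g)"
  have \<sigma>: "\<sigma> \<in> orth d n"
    unfolding \<sigma>_def using d n by (intro op_mat_twisted_subst_in_orth[OF g0 g1 w0 wd]) auto
  have "chi d n \<sigma> f = \<phi> f" for f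
  proof (cases "f \<in> cent d n")
    case True
    let ?a = "fps_of_vec n (f *\<^sub>v vec_of_fps n 1)"
    have f: "f = fps_mult_mat n ?a" using True d n by (intro cent_imp_fps_mult_mat) auto
    then have "fps_mult_mat n ?a \<in> cent d n" using True by (simp only: f[symmetric])
    then have "chi d n \<sigma> (fps_mult_mat n ?a) = fps_mult_mat n (?a oo g)"
      unfolding \<sigma>_def by (rule chi_op_mat_twisted_subst[OF g0 g1 w0 \<sigma>[unfolded \<sigma>_def]])
    also have "\<dots> = \<phi> (fps_mult_mat n ?a)"
      using algaut_eq_compose[OF d n \<phi>] by (simp add: g_def)
    finally show ?thesis by (simp only: f[symmetric])
  next
    case False
    then show ?thesis using \<phi> by (simp add: chi_def algaut_def extensional_def)
  qed
  then show ?thesis using \<sigma> by blast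
qed

lemma chi_image:
  assumes "d \<ge> 3" "n \<ge> 2"
  shows "chi d n ` carrier (O_grp d n) = carrier (G_grp d n :: ('a::{alg_closed_field, field_char_0} mat \<Rightarrow> 'a mat) monoid)"
  using assms chi_in_algaut[of d n] exists_orth_chi_eq[of d n] by (auto simp: G_grp_def)

theorem theorem4p3:
  fixes d n :: nat
  assumes "d \<ge> 3" and "n \<ge> 2"
  shows "group (mu_grp d :: 'k::{alg_closed_field, field_char_0} monoid)
       \<and> group (O_grp d n :: 'k mat monoid)
       \<and> group (G_grp d n :: ('k mat \<Rightarrow> 'k mat) monoid)
       \<and> iota n \<in> hom (mu_grp d :: 'k monoid) (O_grp d n)
       \<and> inj_on (iota n) (carrier (mu_grp d :: 'k monoid))
       \<and> chi d n \<in> hom (O_grp d n :: 'k mat monoid) (G_grp d n)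
       \<and> iota n ` carrier (mu_grp d :: 'k monoid)
           = kernel (O_grp d n :: 'k mat monoid) (G_grp d n) (chi d n)
       \<and> chi d n ` carrier (O_grp d n :: 'k mat monoid) = carrier (G_grp d n)"
  using assms
  by (intro conjI group_mu_grp group_O_grp group_G_grp iota_hom inj_on_iota chi_hom
      kernel_chi[symmetric] chi_image) auto

end
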